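(* Let $H$ be a complex Hilbert space and $\mathcal{I}$ an instrument on $H$ with outcome space $(\Omega_\mathcal{I},\mathcal{F}_\mathcal{I})$. For $a,b\in\mathcal{E}(H)$ let $\mathcal{I}_a^*\circ\mathcal{I}_b^*$ be the sub-observable $\Delta\mapsto\mathcal{I}_{a\circ b}^*(\Delta)$, where $a\circ b=a^{1/2}ba^{1/2}$. Then for $a,b,c\in\mathcal{E}(H)$: (1) if $b\perp c$, then $\mathcal{I}_a^*\circ(\mathcal{I}_b^*+\mathcal{I}_c^* )=\mathcal{I}_a^*\circ\mathcal{I}_b^*+\mathcal{I}_a^*\circ\mathcal{I}_c^*$; (2) if $0\le\lambda_i\le1$, $\sum_{i=1}^n\lambda_i=1$, then for any $b_1,\dots,b_n\in\mathcal{E}(H)$, $\mathcal{I}_a^*\circ\big(\sum_{i=1}^n\lambda_i\mathcal{I}_{b_i}^*\big)=\sum_{i=1}^n\lambda_i\,\mathcal{I}_a^*\circ\mathcal{I}_{b_i}^*$; (3) $\mathcal{I}_I^*\circ\mathcal{I}_a^*=\mathcal{I}_a^*\circ\mathcal{I}_I^*=\mathcal{I}_a^*$; (4) if $a\circ b=0$, then $\mathcal{I}_a^*\circ\mathcal{I}_b^*=\mathcal{I}_b^*\circ\mathcal{I}_a^*$; (5) if $ab=ba$, then $\mathcal{I}_a^*\circ(\mathcal{I}_b^*\circ\mathcal{I}_c^* )=(\mathcal{I}_a^*\circ\mathcal{I}_b^* )\circ\mathcal{I}_c^*$; (6) if $ac=ca$ and $bc=cb$, then $\mathcal{I}_c^*\circ(\mathcal{I}_a^*\circ\mathcal{I}_b^*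 )=(\mathcal{I}_a^*\circ\mathcal{I}_b^* )\circ\mathcal{I}_c^*$, and $\mathcal{I}_c^*\circ(\mathcal{I}_a^*+\mathcal{I}_b^* )=(\mathcal{I}_a^*+\mathcal{I}_b^* )\circ\mathcal{I}_c^*$ when $a\perp b$; (7) $\mathcal{I}_a^*\circ\mathcal{I}_b^*\le\mathcal{I}_a^*$; (8) if $a\le b$, then $\mathcal{I}_c^*\circ\mathcal{I}_a^*\le\mathcal{I}_c^*\circ\mathcal{I}_b^*$.
   Context: $\mathcal{E}(H)$ is the set of effects ($0\le a\le I$); $a\perp b$ means $a+b\le I$. States are effects of trace one. An instrument with outcome space $(\Omega_\mathcal{I},\mathcal{F}_\mathcal{I})$ is a countably additive map $\Delta\mapsto\mathcal{I}(\Delta)$ into completely positive linear maps with $\mathrm{tr}[\mathcal{I}(\Delta)(\rho)]\le1$ for states, $\mathcal{I}(\Omega_\mathcal{I})$ trace preserving on states. The dual $\mathcal{I}^*(\Delta)$ is the linear map defined by $\mathrm{tr}[\rho\,\mathcal{I}^*(\Delta)(B)]=\mathrm{tr}[\mathcal{I}(\Delta)(\rho)B]$ for all states $\rho$ and bounded $B$, and $\mathcal{I}_a^*(\Delta)=\mathcal{I}^*(\Delta)(a)$; each $\mathcal{I}_a^*$ is a sub-observable (countably additive effect-valued measure). Sums and scalar multiples of sub-observables are pointwise; by linearity of $\mathcal{I}^*(\Delta)$, $\mathcal{I}_b^*+\mathcal{I}_c^*=\mathcal{I}_{b+c}^*$ for $b\perp c$ and $\sum\lambda_i\mathcal{I}_{b_i}^*=\mathcal{I}_{\sum\lambda_ib_i}^*$,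 and the sequential product of such sub-observables is interpreted via these representations (e.g. $\mathcal{I}_a^*\circ(\mathcal{I}_b^*+\mathcal{I}_c^* )=\mathcal{I}_{a\circ(b+c)}^*$). For sub-observables with the same outcome space, $A\le B$ means $A(\Delta)\le B(\Delta)$ for every $\Delta$. *)

theory Defs
  imports "HOL-Analysis.Analysis"
begin

class chilbert_space = real_normed_vector + complete_space +
  fixes scaleC :: "complex \<Rightarrow> 'a \<Rightarrow> 'a" (infixr \<open>*\<^sub>C\<close> 75)
    and cinner :: "'a \<Rightarrow> 'a \<Rightarrow> complex"
  assumes scaleC_add_right: "c *\<^sub>C (x + y) = c *\<^sub>C x + c *\<^sub>C y"
    and scaleC_add_left: "(c + d) *\<^sub>C x = c *\<^sub>C x + d *\<^sub>C x"
    and scaleC_scaleC: "c *\<^sub>C (d *\<^sub>C x) = (c * d) *\<^sub>C x"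
    and scaleC_one: "1 *\<^sub>C x = x"
    and scaleR_scaleC: "scaleR r x = complex_of_real r *\<^sub>C x"
    and cinner_cnj: "cinner y x = cnj (cinner x y)"
    and cinner_add_right: "cinner x (y + z) = cinner x y + cinner x z"
    and cinner_scaleC_right: "cinner x (c *\<^sub>C y) = c * cinner x y"
    and cinner_self_nonneg: "0 \<le> Re (cinner x x)"
    and cinner_self_eq_0: "cinner x x = 0 \<longleftrightarrow> x = 0"
    and norm_cinner: "norm x = sqrt (Re (cinner x x))"

definition op_add :: "('h::chilbert_space \<Rightarrow> 'h) \<Rightarrow> ('h \<Rightarrow> 'h) \<Rightarrow> 'h \<Rightarrow> 'h" where
  "op_add S T = (\<lambda>x. S x + T x)"

definition op_minus :: "('h::chilbert_space \<Rightarrow> 'h) \<Rightarrow> ('h \<Rightarrow> 'h) \<Rightarrow> 'h \<Rightarrow> 'h" where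
  "op_minus S T = (\<lambda>x. S x - T x)"

definition op_scale :: "complex \<Rightarrow> ('h::chilbert_space \<Rightarrow> 'h) \<Rightarrow> 'h \<Rightarrow> 'h" where
  "op_scale c T = (\<lambda>x. c *\<^sub>C T x)"

definition op_zero :: "'h::chilbert_space \<Rightarrow> 'h" where
  "op_zero = (\<lambda>x. 0)"

definition bounded_op :: "('h::chilbert_space \<Rightarrow> 'h) \<Rightarrow> bool" where
  "bounded_op T \<longleftrightarrow> (\<forall>x y. T (x + y) = T x + T y) \<and> (\<forall>c x. T (c *\<^sub>C x) = c *\<^sub>C T x)
     \<and> (\<exists>K. \<forall>x. norm (T x) \<le> K * norm x)"

definition positive_op :: "('h::chilbert_space \<Rightarrow> 'h) \<Rightarrow> bool" where
  "positive_op T \<longleftrightarrow> bounded_op T \<and> (\<forall>x. Im (cinner x (T x)) = 0 \<and> 0 \<le> Re (cinner x (T x)))"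

definition op_le :: "('h::chilbert_space \<Rightarrow> 'h) \<Rightarrow> ('h \<Rightarrow> 'h) \<Rightarrow> bool" where
  "op_le A B \<longleftrightarrow> positive_op (op_minus B A)"

definition effect :: "('h::chilbert_space \<Rightarrow> 'h) \<Rightarrow> bool" where
  "effect a \<longleftrightarrow> op_le op_zero a \<and> op_le a id"

definition eff_orth :: "('h::chilbert_space \<Rightarrow> 'h) \<Rightarrow> ('h \<Rightarrow> 'h) \<Rightarrow> bool" where
  "eff_orth a b \<longleftrightarrow> op_le (op_add a b) id"

definition op_sqrt :: "('h::chilbert_space \<Rightarrow> 'h) \<Rightarrow> 'h \<Rightarrow> 'h" where
  "op_sqrt a = (THE s. positive_op s \<and> s \<circ> s = a)"

definition seqp :: "('h::chilbert_space \<Rightarrow> 'h) \<Rightarrow> ('h \<Rightarrow> 'h) \<Rightarrow> 'h \<Rightarrow> 'h" where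
  "seqp a b = op_sqrt a \<circ> b \<circ> op_sqrt a"

definition adjoint_op :: "('h::chilbert_space \<Rightarrow> 'h) \<Rightarrow> 'h \<Rightarrow> 'h" where
  "adjoint_op T = (THE S. \<forall>x y. cinner (S x) y = cinner x (T y))"

definition abs_op :: "('h::chilbert_space \<Rightarrow> 'h) \<Rightarrow> 'h \<Rightarrow> 'h" where
  "abs_op T = op_sqrt (adjoint_op T \<circ> T)"

definition is_onb :: "'h::chilbert_space set \<Rightarrow> bool" where
  "is_onb B \<longleftrightarrow> (\<forall>e\<in>B. cinner e e = 1) \<and> (\<forall>e\<in>B. \<forall>f\<in>B. e \<noteq> f \<longrightarrow> cinner e f = 0)
     \<and> (\<forall>x. (\<forall>e\<in>B. cinner e x = 0) \<longrightarrow> x = 0)"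

definition some_onb :: "'h::chilbert_space set" where
  "some_onb = (SOME B. is_onb B)"

text \<open>Trace tr T = \<Sum>_e \<langle>e, T e\<rangle> over an orthonormal basis (basis independent on trace class).\<close>
definition trace :: "('h::chilbert_space \<Rightarrow> 'h) \<Rightarrow> complex" where
  "trace T = infsum (\<lambda>e. cinner e (T e)) some_onb"

definition trace_class :: "('h::chilbert_space \<Rightarrow> 'h) \<Rightarrow> bool" where
  "trace_class T \<longleftrightarrow> bounded_op T \<and> (\<lambda>e. cinner e (abs_op T e)) summable_on some_onb"

definition trace_norm :: "('h::chilbert_space \<Rightarrow> 'h) \<Rightarrow> real" where
  "trace_norm T = Re (trace (abs_op T))"

definition state :: "('h::chilbert_space \<Rightarrow> 'h) \<Rightarrow> bool" where
  "state \<rho> \<longleftrightarrow> effect \<rho> \<and> trace \<rho> = 1"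

text \<open>Positivity of an n \<times> n block operator matrix acting on H^n.\<close>
definition block_positive :: "nat \<Rightarrow> (nat \<Rightarrow> nat \<Rightarrow> 'h::chilbert_space \<Rightarrow> 'h) \<Rightarrow> bool" where
  "block_positive n T \<longleftrightarrow> (\<forall>x::nat \<Rightarrow> 'h.
     Im (\<Sum>i<n. \<Sum>j<n. cinner (x i) (T i j (x j))) = 0 \<and>
     0 \<le> Re (\<Sum>i<n. \<Sum>j<n. cinner (x i) (T i j (x j))))"

definition completely_positive :: "(('h::chilbert_space \<Rightarrow> 'h) \<Rightarrow> ('h \<Rightarrow> 'h)) \<Rightarrow> bool" where
  "completely_positive \<Phi> \<longleftrightarrow> (\<forall>n T. (\<forall>i<n. \<forall>j<n. trace_class (T i j)) \<longrightarrow> block_positive n T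
      \<longrightarrow> block_positive n (\<lambda>i j. \<Phi> (T i j)))"

definition instrument :: "'d measure \<Rightarrow> ('d set \<Rightarrow> ('h::chilbert_space \<Rightarrow> 'h) \<Rightarrow> ('h \<Rightarrow> 'h)) \<Rightarrow> bool" where
  "instrument M \<I> \<longleftrightarrow>
     (\<forall>\<Delta>\<in>sets M.
        (\<forall>S T. trace_class S \<longrightarrow> trace_class T \<longrightarrow> \<I> \<Delta> (op_add S T) = op_add (\<I> \<Delta> S) (\<I> \<Delta> T)) \<and>
        (\<forall>c T. trace_class T \<longrightarrow> \<I> \<Delta> (op_scale c T) = op_scale c (\<I> \<Delta> T)) \<and>
        (\<forall>T. trace_class T \<longrightarrow> trace_class (\<I> \<Delta> T)) \<and>
        completely_positive (\<I> \<Delta>) \<and>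
        (\<forall>\<rho>. state \<rho> \<longrightarrow> Re (trace (\<I> \<Delta> \<rho>)) \<le> 1)) \<and>
     (\<forall>\<rho>. state \<rho> \<longrightarrow> trace (\<I> (space M) \<rho>) = 1) \<and>
     (\<forall>A::nat \<Rightarrow> 'd set. range A \<subseteq> sets M \<longrightarrow> disjoint_family A \<longrightarrow>
        (\<forall>T. trace_class T \<longrightarrow>
          (\<lambda>N. trace_norm (op_minus (\<I> (\<Union>n. A n) T) (\<lambda>x. \<Sum>n<N. \<I> (A n) T x))) \<longlonglongrightarrow> 0))"

definition dual_instrument :: "'d measure \<Rightarrow> ('d set \<Rightarrow> ('h::chilbert_space \<Rightarrow> 'h) \<Rightarrow> ('h \<Rightarrow> 'h))
    \<Rightarrow> ('d set \<Rightarrow> ('h \<Rightarrow> 'h) \<Rightarrow> ('h \<Rightarrow> 'h)) \<Rightarrow> bool" where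
  "dual_instrument M \<I> \<I>s \<longleftrightarrow> (\<forall>\<Delta>\<in>sets M. \<forall>B. bounded_op B \<longrightarrow>
     bounded_op (\<I>s \<Delta> B) \<and> (\<forall>\<rho>. state \<rho> \<longrightarrow> trace (\<rho> \<circ> \<I>s \<Delta> B) = trace (\<I> \<Delta> \<rho> \<circ> B)))"

definition sub_obs :: "('d set \<Rightarrow> ('h::chilbert_space \<Rightarrow> 'h) \<Rightarrow> ('h \<Rightarrow> 'h)) \<Rightarrow> ('h \<Rightarrow> 'h) \<Rightarrow> 'd set \<Rightarrow> 'h \<Rightarrow> 'h" where
  "sub_obs \<I>s a = (\<lambda>\<Delta>. \<I>s \<Delta> a)"

definition sub_add :: "('d set \<Rightarrow> 'h::chilbert_space \<Rightarrow> 'h) \<Rightarrow> ('d set \<Rightarrow> 'h \<Rightarrow> 'h) \<Rightarrow> 'd set \<Rightarrow> 'h \<Rightarrow> 'h" where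
  "sub_add A B = (\<lambda>\<Delta>. op_add (A \<Delta>) (B \<Delta>))"

definition sub_scale :: "real \<Rightarrow> ('d set \<Rightarrow> 'h::chilbert_space \<Rightarrow> 'h) \<Rightarrow> 'd set \<Rightarrow> 'h \<Rightarrow> 'h" where
  "sub_scale r A = (\<lambda>\<Delta>. op_scale (complex_of_real r) (A \<Delta>))"

definition sub_eq :: "'d measure \<Rightarrow> ('d set \<Rightarrow> 'h::chilbert_space \<Rightarrow> 'h) \<Rightarrow> ('d set \<Rightarrow> 'h \<Rightarrow> 'h) \<Rightarrow> bool" where
  "sub_eq M A B \<longleftrightarrow> (\<forall>\<Delta>\<in>sets M. A \<Delta> = B \<Delta>)"

definition sub_le :: "'d measure \<Rightarrow> ('d set \<Rightarrow> 'h::chilbert_space \<Rightarrow> 'h) \<Rightarrow> ('d set \<Rightarrow> 'h \<Rightarrow> 'h) \<Rightarrow> bool" where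
  "sub_le M A B \<longleftrightarrow> (\<forall>\<Delta>\<in>sets M. op_le (A \<Delta>) (B \<Delta>))"

end

theory Submission
  imports Defs
begin

text \<open>On the Hilbert space side, \<open>a \<circ> b = \<surd>a b \<surd>a\<close> is linear and monotone in \<open>b\<close>, and
  \<open>\<surd>a\<close> commutes with every bounded operator commuting with \<open>a\<close>; square roots are obtained
  from the power series of \<open>1 - sqrt (1 - t)\<close>, whose coefficients are nonnegative with sum 1.
  On the instrument side, every \<open>\<I>*(\<Delta>)\<close> is additive, real-linear and positive on bounded
  self-adjoint operators: the projection onto a unit vector \<open>v\<close> is a state, so
  \<open>\<langle>v, \<I>*(\<Delta>)(X) v\<rangle> = tr[\<I>(\<Delta>)(|v\<rangle>\<langle>v|) X]\<close>, and \<open>X \<mapsto> tr[T X]\<close> is linear and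
  positive for positive trace-class \<open>T\<close>, being an absolutely convergent double sum over an
  orthonormal basis built from the Hilbert--Schmidt operator \<open>\<surd>T\<close>. Each item then combines
  an identity or inequality for sequential products with these properties of \<open>\<I>*\<close>.\<close>

section \<open>Complex inner product spaces\<close>

global_interpretation complex_vector: vector_space "scaleC :: complex \<Rightarrow> 'a \<Rightarrow> 'a::chilbert_space"
  by unfold_locales (simp_all add: scaleC_add_right scaleC_add_left scaleC_scaleC scaleC_one)

subclass (in chilbert_space) banach ..

lemma cinner_add_left: "cinner (x + y) z = cinner x z + cinner y (z::'a::chilbert_space)"
  by (metis cinner_cnj cinner_add_right complex_cnj_add)

lemma cinner_scaleC_left: "cinner (c *\<^sub>C x) (y::'a::chilbert_space) = cnj c * cinner x y"
  by (metis cinner_cnj cinner_scaleC_right complex_cnj_mult)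

lemma cinner_zero_right [simp]: "cinner x (0::'a::chilbert_space) = 0"
  and cinner_diff_right: "cinner x (y - z) = cinner x y - cinner x z"
  and cinner_sum_right: "cinner x (\<Sum>i\<in>S. f i) = (\<Sum>i\<in>S. cinner x (f i))"
proof -
  interpret additive "cinner x" by unfold_locales (rule cinner_add_right)
  show "cinner x 0 = 0" by (rule zero)
  show "cinner x (y - z) = cinner x y - cinner x z" by (rule diff)
  show "cinner x (\<Sum>i\<in>S. f i) = (\<Sum>i\<in>S. cinner x (f i))" by (rule sum)
qed

lemma cinner_zero_left [simp]: "cinner (0::'a::chilbert_space) x = 0"
  and cinner_diff_left: "cinner (y - z) x = cinner y x - cinner z x"
  and cinner_sum_left: "cinner (\<Sum>i\<in>S. f i) x = (\<Sum>i\<in>S. cinner (f i) x)"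
proof -
  interpret additive "\<lambda>y. cinner y x" by unfold_locales (rule cinner_add_left)
  show "cinner 0 x = 0" by (rule zero)
  show "cinner (y - z) x = cinner y x - cinner z x" by (rule diff)
  show "cinner (\<Sum>i\<in>S. f i) x = (\<Sum>i\<in>S. cinner (f i) x)" by (rule sum)
qed

lemma cinner_scaleR_right:
  "cinner x (r *\<^sub>R y) = complex_of_real r * cinner x (y::'a::chilbert_space)"
  by (simp add: scaleR_scaleC cinner_scaleC_right)

lemma cinner_scaleR_left:
  "cinner (r *\<^sub>R x) y = complex_of_real r * cinner x (y::'a::chilbert_space)"
  by (simp add: scaleR_scaleC cinner_scaleC_left)

lemma cinner_self: "cinner x x = complex_of_real ((norm (x::'a::chilbert_space))\<^sup>2)"
proof -
  have "Im (cinner x x) = 0" using arg_cong[OF cinner_cnj[of x x], of Im] by simp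
  moreover have "Re (cinner x x) = (norm x)\<^sup>2"
    using norm_cinner[of x] cinner_self_nonneg[of x] by simp
  ultimately show ?thesis by (simp add: complex_eq_iff)
qed

declare cinner_self_eq_0 [simp]

lemma cinner_conj_mult:
  "cinner x y * cinner y x = complex_of_real ((cmod (cinner x (y::'a::chilbert_space)))\<^sup>2)"
  by (metis cinner_cnj complex_norm_square of_real_power)

lemma cmod_cinner_commute: "cmod (cinner x y) = cmod (cinner y (x::'a::chilbert_space))"
  by (metis cinner_cnj complex_mod_cnj)

lemma norm_scaleC: "norm (c *\<^sub>C x) = cmod c * norm (x::'a::chilbert_space)"
proof -
  have "complex_of_real ((norm (c *\<^sub>C x))\<^sup>2) = cinner (c *\<^sub>C x) (c *\<^sub>C x)"
    by (rule cinner_self[symmetric])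
  also have "\<dots> = (cnj c * c) * cinner x x"
    by (simp add: cinner_scaleC_left cinner_scaleC_right)
  also have "\<dots> = complex_of_real ((cmod c * norm x)\<^sup>2)"
    by (metis cinner_self complex_norm_square mult.commute of_real_mult power_mult_distrib)
  finally have "(norm (c *\<^sub>C x))\<^sup>2 = (cmod c * norm x)\<^sup>2"
    by (simp only: of_real_eq_iff)
  then show ?thesis by (simp add: power2_eq_iff_nonneg)
qed

lemma nonneg_quadratic_imp_le:
  fixes p q \<beta> :: real
  assumes nonneg: "\<And>t. 0 \<le> p - 2 * t * \<beta> + t\<^sup>2 * \<beta> * q" and "0 \<le> q" "0 \<le> \<beta>"
  shows "\<beta> \<le> p * q"
proof (cases "q = 0")
  case True
  have "p \<ge> 0" using nonneg[of 0] by simp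
  show ?thesis
  proof (rule ccontr)
    assume "\<not> \<beta> \<le> p * q"
    then have "\<beta> > 0" using True by simp
    then show False using nonneg[of "(p + 1) / \<beta>"] True \<open>p \<ge> 0\<close> by simp
  qed
next
  case False
  with \<open>0 \<le> q\<close> have "q > 0" by simp
  have "0 \<le> p - 2 * (1 / q) * \<beta> + (1 / q)\<^sup>2 * \<beta> * q" by (rule nonneg)
  also have "\<dots> = p - \<beta> / q" using \<open>q > 0\<close> by (simp add: power2_eq_square field_simps)
  finally show ?thesis using \<open>q > 0\<close> by (simp add: divide_le_eq)
qed

lemma sesquilinear_Cauchy_Schwarz:
  fixes B :: "'a::chilbert_space \<Rightarrow> 'a \<Rightarrow> complex"
  assumes add_right: "\<And>x y z. B x (y + z) = B x y + B x z"
    and scaleC_right: "\<And>x c y. B x (c *\<^sub>C y) = c * B x y"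
    and hermitian: "\<And>x y. B y x = cnj (B x y)"
    and nonneg: "\<And>x. 0 \<le> Re (B x x)"
  shows "(cmod (B x y))\<^sup>2 \<le> Re (B x x) * Re (B y y)"
proof (rule nonneg_quadratic_imp_le)
  have add_left: "B (x + y) z = B x z + B y z" for x y z
    by (metis add_right hermitian complex_cnj_add)
  have scaleC_left: "B (c *\<^sub>C x) y = cnj c * B x y" for c x y
    by (metis scaleC_right hermitian complex_cnj_mult)
  have real_diag: "B z z = complex_of_real (Re (B z z))" for z
    using arg_cong[OF hermitian[of z z], of Im] by (simp add: complex_eq_iff)
  fix t :: real
  define l where "l = - complex_of_real t * cnj (B x y)"
  have "B (x + l *\<^sub>C y) (x + l *\<^sub>C y) = B x x + l * B x y + cnj l * cnj (B x y) + cnj l * l * B y y"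
    by (simp add: add_left add_right scaleC_left scaleC_right hermitian[of x y] algebra_simps)
  also have "\<dots> = complex_of_real
      (Re (B x x) - 2 * t * (cmod (B x y))\<^sup>2 + t\<^sup>2 * (cmod (B x y))\<^sup>2 * Re (B y y))"
    using real_diag[of x] real_diag[of y] complex_norm_square[of "B x y"]
    by (simp add: l_def power2_eq_square algebra_simps)
  finally show "0 \<le> Re (B x x) - 2 * t * (cmod (B x y))\<^sup>2 + t\<^sup>2 * (cmod (B x y))\<^sup>2 * Re (B y y)"
    using nonneg[of "x + l *\<^sub>C y"] by simp
qed (use nonneg in auto)

lemma cinner_Cauchy_Schwarz: "cmod (cinner x y) \<le> norm x * norm (y::'a::chilbert_space)"
proof -
  have "(cmod (cinner x y))\<^sup>2 \<le> Re (cinner x x) * Re (cinner y y)"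
    by (rule sesquilinear_Cauchy_Schwarz)
      (simp_all add: cinner_add_right cinner_scaleC_right cinner_self_nonneg flip: cinner_cnj)
  also have "\<dots> = (norm x * norm y)\<^sup>2"
    by (simp add: cinner_self power_mult_distrib)
  finally show ?thesis by (rule power2_le_imp_le) simp
qed

lemma bounded_linear_cinner_right: "bounded_linear (cinner (x::'a::chilbert_space))"
proof (rule bounded_linear_intro[of _ "norm x"])
  show "cinner x (y + z) = cinner x y + cinner x z" for y z by (rule cinner_add_right)
  show "cinner x (r *\<^sub>R y) = r *\<^sub>R cinner x y" for r y
    by (simp add: cinner_scaleR_right scaleR_conv_of_real)
  show "norm (cinner x y) \<le> norm y * norm x" for y
    using cinner_Cauchy_Schwarz[of x y] by (simp add: mult.commute)
qed

lemma bounded_linear_scaleC_right: "bounded_linear (\<lambda>x::'a::chilbert_space. c *\<^sub>C x)"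
proof (rule bounded_linear_intro[of _ "cmod c"])
  show "c *\<^sub>C (r *\<^sub>R x) = r *\<^sub>R (c *\<^sub>C x)" for r and x :: 'a
    by (simp add: scaleR_scaleC mult.commute)
qed (simp_all add: scaleC_add_right norm_scaleC mult.commute)

lemma bounded_linear_scaleC_left: "bounded_linear (\<lambda>c. c *\<^sub>C (x::'a::chilbert_space))"
  by (rule bounded_linear_intro[of _ "norm x"])
    (simp_all add: scaleC_add_left norm_scaleC scaleR_scaleC scaleR_conv_of_real)

section \<open>Bounded, self-adjoint and positive operators\<close>

lemma bounded_op_iff:
  "bounded_op T \<longleftrightarrow> bounded_linear T \<and> (\<forall>c x. T (c *\<^sub>C x) = c *\<^sub>C T x)"
proof
  assume T: "bounded_op T"
  then obtain K where K: "\<And>x. norm (T x) \<le> K * norm x" by (auto simp: bounded_op_def)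
  have "bounded_linear T"
    by (rule bounded_linear_intro[of _ K])
      (use T K in \<open>simp_all add: bounded_op_def scaleR_scaleC mult.commute\<close>)
  with T show "bounded_linear T \<and> (\<forall>c x. T (c *\<^sub>C x) = c *\<^sub>C T x)"
    by (simp add: bounded_op_def)
next
  assume T: "bounded_linear T \<and> (\<forall>c x. T (c *\<^sub>C x) = c *\<^sub>C T x)"
  then obtain K where "\<And>x. norm (T x) \<le> norm x * K" using bounded_linear.bounded by blast
  with T show "bounded_op T"
    unfolding bounded_op_def by (metis bounded_linear.axioms(1) linear_add mult.commute)
qed

lemma bounded_opI:
  "bounded_linear T \<Longrightarrow> (\<And>c x. T (c *\<^sub>C x) = c *\<^sub>C T x) \<Longrightarrow> bounded_op T"
  by (simp add: bounded_op_iff)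

lemma bounded_op_bounded_linear: "bounded_op T \<Longrightarrow> bounded_linear T"
  by (simp add: bounded_op_iff)

lemma bounded_op_add: "bounded_op T \<Longrightarrow> T (x + y) = T x + T y"
  and bounded_op_scaleC: "bounded_op T \<Longrightarrow> T (c *\<^sub>C x) = c *\<^sub>C T x"
  and bounded_op_scaleR: "bounded_op T \<Longrightarrow> T (r *\<^sub>R x) = r *\<^sub>R T x"
  and bounded_op_zero: "bounded_op T \<Longrightarrow> T 0 = 0"
  and bounded_op_diff: "bounded_op T \<Longrightarrow> T (x - y) = T x - T y"
  and bounded_op_sum: "bounded_op T \<Longrightarrow> T (\<Sum>i\<in>S. f i) = (\<Sum>i\<in>S. T (f i))"
  by (simp_all add: bounded_op_iff bounded_linear.linear linear_add linear_scale linear_0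
      linear_diff linear_sum)

lemma bounded_op_bound: "bounded_op T \<Longrightarrow> \<exists>K\<ge>0. \<forall>x. norm (T x) \<le> K * norm x"
  by (metis bounded_op_bounded_linear bounded_linear.nonneg_bounded mult.commute)

lemma bounded_op_comp: "bounded_op S \<Longrightarrow> bounded_op T \<Longrightarrow> bounded_op (S \<circ> T)"
  by (auto simp: bounded_op_iff o_def intro: bounded_linear_compose)

lemma bounded_op_id: "bounded_op (id :: 'h::chilbert_space \<Rightarrow> 'h)"
  by (simp add: bounded_op_iff id_def)

lemma bounded_op_op_add: "bounded_op S \<Longrightarrow> bounded_op T \<Longrightarrow> bounded_op (op_add S T)"
  by (auto simp: bounded_op_iff op_add_def scaleC_add_right intro: bounded_linear_add)

lemma bounded_op_op_minus: "bounded_op S \<Longrightarrow> bounded_op T \<Longrightarrow> bounded_op (op_minus S T)"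
  by (auto simp: bounded_op_iff op_minus_def complex_vector.scale_right_diff_distrib
      intro: bounded_linear_sub)

lemma bounded_op_scaleC_right: "bounded_op (\<lambda>x::'h::chilbert_space. c *\<^sub>C x)"
  by (simp add: bounded_op_iff bounded_linear_scaleC_right complex_vector.scale_left_commute)

lemma bounded_op_sum_fun:
  "(\<And>i. i \<in> S \<Longrightarrow> bounded_op (T i)) \<Longrightarrow> bounded_op (\<lambda>x. \<Sum>i\<in>S. T i x)"
  by (auto simp: bounded_op_iff complex_vector.scale_sum_right intro: bounded_linear_sum)

lemma bounded_op_lincomb:
  "(\<And>i. i \<in> S \<Longrightarrow> bounded_op (T i)) \<Longrightarrow> bounded_op (\<lambda>x. \<Sum>i\<in>S. c i *\<^sub>C T i x)"
  by (rule bounded_op_sum_fun)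
    (auto intro: bounded_op_comp[OF bounded_op_scaleC_right, unfolded o_def])

lemma bounded_op_funpow: "bounded_op Y \<Longrightarrow> bounded_op (Y ^^ n)"
  by (induction n) (auto simp: bounded_op_id bounded_op_comp)

definition selfadjoint_op :: "('h::chilbert_space \<Rightarrow> 'h) \<Rightarrow> bool" where
  "selfadjoint_op T \<longleftrightarrow> (\<forall>x y. cinner (T x) y = cinner x (T y))"

lemma selfadjoint_opD: "selfadjoint_op T \<Longrightarrow> cinner (T x) y = cinner x (T y)"
  by (simp add: selfadjoint_op_def)

lemma selfadjoint_op_funpow: "selfadjoint_op Y \<Longrightarrow> selfadjoint_op (Y ^^ n)"
  by (induction n) (auto simp: selfadjoint_op_def funpow_swap1)

lemma quadratic_form_polarization:
  assumes X: "bounded_op X"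
  shows "cinner (x + y) (X (x + y)) =
      cinner x (X x) + cinner y (X y) + cinner x (X y) + cinner y (X x)"
    and "cinner (x + \<i> *\<^sub>C y) (X (x + \<i> *\<^sub>C y)) =
      cinner x (X x) + cinner y (X y) + \<i> * cinner x (X y) - \<i> * cinner y (X x)"
proof -
  show "cinner (x + y) (X (x + y)) =
      cinner x (X x) + cinner y (X y) + cinner x (X y) + cinner y (X x)"
    using X by (simp add: bounded_op_add cinner_add_left cinner_add_right)
  have "cinner (x + \<i> *\<^sub>C y) (X (x + \<i> *\<^sub>C y)) = cinner x (X x) + \<i> * cinner x (X y)
      + (cnj \<i> * cinner y (X x) + cnj \<i> * (\<i> * cinner y (X y)))"
    using X by (simp only: bounded_op_add bounded_op_scaleC cinner_add_left cinner_add_right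
        cinner_scaleC_left cinner_scaleC_right) (simp add: algebra_simps)
  then show "cinner (x + \<i> *\<^sub>C y) (X (x + \<i> *\<^sub>C y)) =
      cinner x (X x) + cinner y (X y) + \<i> * cinner x (X y) - \<i> * cinner y (X x)"
    by (simp add: algebra_simps)
qed

text \<open>This needs complex scalars: over the reals, rotations have vanishing quadratic form.\<close>

lemma bounded_op_eqI_quadratic:
  assumes X: "bounded_op X" and Y: "bounded_op Y"
    and eq: "\<And>v. cinner v (X v) = cinner v (Y v)"
  shows "X = Y"
proof
  fix y
  define D where "D = op_minus X Y"
  have D: "bounded_op D" unfolding D_def by (rule bounded_op_op_minus[OF X Y])
  have D0: "cinner v (D v) = 0" for v by (simp add: D_def op_minus_def cinner_diff_right eq)
  have "cinner x (D y) = 0" for x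
  proof -
    have "cinner x (D y) + cinner y (D x) = 0"
      and "\<i> * cinner x (D y) - \<i> * cinner y (D x) = 0"
      using quadratic_form_polarization[OF D, of x y] D0 by simp_all
    then have "2 * \<i> * cinner x (D y) = 0" by (simp add: algebra_simps)
    then show ?thesis by simp
  qed
  from this[of "D y"] show "X y = Y y" by (simp add: D_def op_minus_def)
qed

lemma quadratic_form_scaleR:
  "cinner (r *\<^sub>R u) (Z (r *\<^sub>R u)) = complex_of_real (r\<^sup>2) * cinner u (Z u)" if "bounded_op Z"
  using that
  by (simp add: bounded_op_scaleR cinner_scaleR_left cinner_scaleR_right power2_eq_square)

lemma unit_vector_decomposition:
  assumes "v \<noteq> 0"
  obtains u where "norm u = 1" "v = norm v *\<^sub>R u"
  using assms by (intro that[of "(1 / norm v) *\<^sub>R v"]) simp_all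

lemma bounded_op_eqI_unit_quadratic:
  assumes Z: "bounded_op Z" and W: "bounded_op W"
    and eq: "\<And>u. norm u = 1 \<Longrightarrow> cinner u (Z u) = cinner u (W u)"
  shows "Z = W"
proof (rule bounded_op_eqI_quadratic[OF Z W])
  fix v :: 'a
  show "cinner v (Z v) = cinner v (W v)"
  proof (cases "v = 0")
    case True
    then show ?thesis by (simp add: bounded_op_zero[OF Z] bounded_op_zero[OF W])
  next
    case False
    then obtain u where "norm u = 1" "v = norm v *\<^sub>R u" by (rule unit_vector_decomposition)
    then show ?thesis by (metis quadratic_form_scaleR[OF Z] quadratic_form_scaleR[OF W] eq)
  qed
qed

lemma positive_opI_unit:
  assumes Z: "bounded_op Z"
    and nonneg: "\<And>u. norm u = 1 \<Longrightarrow> Im (cinner u (Z u)) = 0 \<and> 0 \<le> Re (cinner u (Z u))"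
  shows "positive_op Z"
proof -
  have "Im (cinner v (Z v)) = 0 \<and> 0 \<le> Re (cinner v (Z v))" for v
  proof (cases "v = 0")
    case False
    then obtain u where "norm u = 1" "v = norm v *\<^sub>R u" by (rule unit_vector_decomposition)
    then show ?thesis using quadratic_form_scaleR[OF Z, of "norm v" u] nonneg[of u] by simp
  qed simp
  with Z show ?thesis by (simp add: positive_op_def)
qed

lemma positive_opD:
  assumes "positive_op T"
  shows "bounded_op T" "Im (cinner x (T x)) = 0" "0 \<le> Re (cinner x (T x))"
  using assms by (auto simp: positive_op_def)

lemma positive_op_selfadjoint:
  assumes P: "positive_op T"
  shows "selfadjoint_op T"
  unfolding selfadjoint_op_def
proof (intro allI)
  fix x y
  note T = positive_opD(1)[OF P] and real = positive_opD(2)[OF P]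
  have "Im (cinner x (T y) + cinner y (T x)) = 0"
    using quadratic_form_polarization(1)[OF T, of x y] real[of "x + y"] real[of x] real[of y]
    by simp
  moreover have "Im (\<i> * cinner x (T y) - \<i> * cinner y (T x)) = 0"
    using quadratic_form_polarization(2)[OF T, of x y] real[of "x + \<i> *\<^sub>C y"] real[of x] real[of y]
    by simp
  ultimately have "cinner y (T x) = cnj (cinner x (T y))" by (simp add: complex_eq_iff)
  then show "cinner (T x) y = cinner x (T y)" by (metis cinner_cnj complex_cnj_cnj)
qed

lemma positive_op_Cauchy_Schwarz:
  assumes P: "positive_op T"
  shows "(cmod (cinner x (T y)))\<^sup>2 \<le> Re (cinner x (T x)) * Re (cinner y (T y))"
proof (rule sesquilinear_Cauchy_Schwarz[where B = "\<lambda>x y. cinner x (T y)"])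
  note T = positive_opD(1)[OF P]
  show "cinner x (T (y + z)) = cinner x (T y) + cinner x (T z)" for x y z
    using T by (simp add: bounded_op_add cinner_add_right)
  show "cinner x (T (c *\<^sub>C y)) = c * cinner x (T y)" for x c y
    using T by (simp add: bounded_op_scaleC cinner_scaleC_right)
  show "cinner y (T x) = cnj (cinner x (T y))" for x y
    by (metis cinner_cnj selfadjoint_opD[OF positive_op_selfadjoint[OF P]])
qed (rule positive_opD(3)[OF P])

lemma positive_op_kernelI:
  assumes P: "positive_op T" and "Re (cinner y (T y)) = 0"
  shows "T y = 0"
  using positive_op_Cauchy_Schwarz[OF P, of "T y" y] assms by simp

lemma positive_op_contraction:
  assumes P: "positive_op T" and le: "\<And>x. Re (cinner x (T x)) \<le> (norm x)\<^sup>2"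
  shows "norm (T x) \<le> norm x"
proof -
  have "((norm (T x))\<^sup>2)\<^sup>2 = (cmod (cinner (T x) (T x)))\<^sup>2"
    by (simp only: cinner_self norm_of_real) simp
  also have "\<dots> \<le> Re (cinner (T x) (T (T x))) * Re (cinner x (T x))"
    using positive_op_Cauchy_Schwarz[OF P, of "T x" x] by simp
  also have "\<dots> \<le> (norm (T x))\<^sup>2 * (norm x)\<^sup>2"
    by (rule mult_mono[OF le le]) (auto intro: positive_opD(3)[OF P])
  finally have "((norm (T x))\<^sup>2)\<^sup>2 \<le> (norm (T x) * norm x)\<^sup>2"
    by (simp add: power_mult_distrib)
  then have "(norm (T x))\<^sup>2 \<le> norm (T x) * norm x"
    by (rule power2_le_imp_le) simp
  then show ?thesis by (cases "norm (T x) = 0") (auto simp: power2_eq_square)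
qed

lemma positive_op_scaleR:
  assumes P: "positive_op T" and "0 \<le> r"
  shows "positive_op (\<lambda>x. r *\<^sub>R T x)"
proof -
  have "bounded_op (\<lambda>x. r *\<^sub>R T x)"
    using bounded_op_comp[OF bounded_op_scaleC_right positive_opD(1)[OF P]]
    by (simp add: o_def scaleR_scaleC)
  with assms show ?thesis by (simp add: positive_op_def cinner_scaleR_right)
qed

lemma positive_op_id: "positive_op (id :: 'h::chilbert_space \<Rightarrow> 'h)"
  by (simp add: positive_op_def bounded_op_id cinner_self)

lemma positive_op_comp_self:
  assumes P: "positive_op T"
  shows "positive_op (T \<circ> T)"
proof -
  have "cinner x (T (T x)) = complex_of_real ((norm (T x))\<^sup>2)" for x
    by (simp add: selfadjoint_opD[OF positive_op_selfadjoint[OF P], symmetric] cinner_self)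
  then show ?thesis
    using bounded_op_comp[OF positive_opD(1)[OF P] positive_opD(1)[OF P]]
    by (simp add: positive_op_def)
qed

lemma op_le_iff: "op_le A B \<longleftrightarrow> positive_op (\<lambda>x. B x - A x)"
  by (simp add: op_le_def op_minus_def)

lemma effect_iff: "effect a \<longleftrightarrow> positive_op a \<and> positive_op (\<lambda>x. x - a x)"
  by (simp add: effect_def op_le_iff op_zero_def)

lemma effect_positive_op: "effect a \<Longrightarrow> positive_op a"
  by (simp add: effect_iff)

lemma effect_bounded_op: "effect a \<Longrightarrow> bounded_op a"
  by (simp add: effect_iff positive_op_def)

lemma effect_selfadjoint: "effect a \<Longrightarrow> selfadjoint_op a"
  by (simp add: effect_iff positive_op_selfadjoint)

lemma effect_contraction:
  assumes a: "effect a"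
  shows "norm (a x) \<le> norm x"
proof (rule positive_op_contraction[OF effect_positive_op[OF a]])
  fix x
  have "0 \<le> Re (cinner x (x - a x))" using a by (auto simp: effect_iff positive_op_def)
  then show "Re (cinner x (a x)) \<le> (norm x)\<^sup>2" by (simp add: cinner_diff_right cinner_self)
qed

section \<open>Square roots of positive operators\<close>

text \<open>The Taylor coefficients of \<open>g(t) = 1 - sqrt (1 - t)\<close>: the recursion is the coefficient
  form of \<open>g\<^sup>2 = 2 g - t\<close>.\<close>

function sqrt_coeff :: "nat \<Rightarrow> real" where
  "sqrt_coeff n = (if n = 0 then 0 else if n = 1 then 1/2
     else (\<Sum>k\<in>{1..<n}. sqrt_coeff k * sqrt_coeff (n - k)) / 2)"
  by auto
termination by (relation "Wellfounded.measure id") auto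

declare sqrt_coeff.simps [simp del]

lemma sqrt_coeff_0 [simp]: "sqrt_coeff 0 = 0"
  and sqrt_coeff_1 [simp]: "sqrt_coeff (Suc 0) = 1/2"
  by (simp_all add: sqrt_coeff.simps)

lemma sqrt_coeff_rec:
  "n \<ge> 2 \<Longrightarrow> sqrt_coeff n = (\<Sum>k\<in>{1..<n}. sqrt_coeff k * sqrt_coeff (n - k)) / 2"
  by (subst sqrt_coeff.simps) auto

lemma sqrt_coeff_nonneg: "0 \<le> sqrt_coeff n"
proof (induction n rule: less_induct)
  case (less n)
  show ?case
  proof (cases "n \<ge> 2")
    case True
    have "0 \<le> (\<Sum>k\<in>{1..<n}. sqrt_coeff k * sqrt_coeff (n - k))"
      by (rule sum_nonneg) (use less in auto)
    with True show ?thesis by (simp add: sqrt_coeff_rec)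
  next
    case False
    then have "n = 0 \<or> n = 1" by auto
    then show ?thesis by auto
  qed
qed

lemma sqrt_coeff_convolution:
  "(\<Sum>k\<le>n. sqrt_coeff k * sqrt_coeff (n - k)) = 2 * sqrt_coeff n - (if n = 1 then 1 else 0)"
proof (cases "n \<ge> 2")
  case True
  then have "{..n} = insert 0 (insert n {1..<n})" by auto
  with True show ?thesis by (simp add: sqrt_coeff_rec)
next
  case False
  then have "n = 0 \<or> n = 1" by auto
  then show ?thesis by (auto simp: atMost_Suc)
qed

definition sqrt_coeff_sum :: "nat \<Rightarrow> real" where
  "sqrt_coeff_sum N = (\<Sum>n<N. sqrt_coeff n)"

lemma sqrt_coeff_sum_nonneg: "0 \<le> sqrt_coeff_sum N"
  by (simp add: sqrt_coeff_sum_def sum_nonneg sqrt_coeff_nonneg)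

lemma sqrt_coeff_triangle_sum:
  "(\<Sum>(i,j)\<in>{(i,j). i + j < N}. sqrt_coeff i * sqrt_coeff j)
     = 2 * sqrt_coeff_sum N - (if N \<ge> 2 then 1 else 0)"
proof -
  have "(\<Sum>(i,j)\<in>{(i,j). i + j < N}. sqrt_coeff i * sqrt_coeff j)
      = (\<Sum>n<N. \<Sum>i\<le>n. sqrt_coeff i * sqrt_coeff (n - i))"
    by (rule sum.triangle_reindex)
  also have "\<dots> = (\<Sum>n<N. 2 * sqrt_coeff n - (if n = 1 then 1 else 0))"
    by (simp add: sqrt_coeff_convolution)
  also have "\<dots> = 2 * sqrt_coeff_sum N - (if N \<ge> 2 then 1 else 0)"
    by (simp add: sum_subtractf sqrt_coeff_sum_def sum_distrib_left sum.delta')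
  finally show ?thesis .
qed

lemma sqrt_coeff_square_sum:
  "(\<Sum>(i,j)\<in>{..<M} \<times> {..<M}. sqrt_coeff i * sqrt_coeff j) = (sqrt_coeff_sum M)\<^sup>2"
  by (simp add: sqrt_coeff_sum_def power2_eq_square sum_product sum.cartesian_product)

lemma finite_triangle: "finite {(i, j). i + j < (N::nat)}"
  by (rule finite_subset[of _ "{..<N} \<times> {..<N}"]) auto

lemma sqrt_coeff_triangle_le:
  "(\<Sum>(i,j)\<in>{(i,j). i + j < N}. sqrt_coeff i * sqrt_coeff j) \<le> (sqrt_coeff_sum (N - 1))\<^sup>2"
proof -
  let ?A = "{(i,j). i + j < N}" and ?B = "{..<N-1} \<times> {..<N-1}"
  let ?f = "\<lambda>(i,j). sqrt_coeff i * sqrt_coeff j"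
  have "sum ?f ?A = sum ?f (?A \<inter> ?B)"
  proof (rule sum.mono_neutral_right)
    have "i = 0 \<or> j = 0" if "(i, j) \<in> ?A - ?A \<inter> ?B" for i j
      using that by auto
    then show "\<forall>p\<in>?A - ?A \<inter> ?B. ?f p = 0" by fastforce
  qed (auto simp: finite_triangle)
  also have "\<dots> \<le> sum ?f ?B"
    by (rule sum_mono2) (auto simp: sqrt_coeff_nonneg)
  finally show ?thesis by (simp only: sqrt_coeff_square_sum)
qed

lemma sqrt_coeff_sum_le_1: "sqrt_coeff_sum N \<le> 1"
proof (induction N)
  case 0
  then show ?case by (simp add: sqrt_coeff_sum_def)
next
  case (Suc N)
  have "2 * sqrt_coeff_sum (Suc N) - (if Suc N \<ge> 2 then 1 else 0) \<le> (sqrt_coeff_sum N)\<^sup>2"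
    using sqrt_coeff_triangle_le[of "Suc N"] sqrt_coeff_triangle_sum[of "Suc N"] by simp
  moreover have "(sqrt_coeff_sum N)\<^sup>2 \<le> 1"
    using Suc sqrt_coeff_sum_nonneg[of N] by (simp add: power_le_one)
  ultimately show ?case by (auto split: if_splits)
qed

lemma summable_sqrt_coeff: "summable sqrt_coeff"
  by (rule summableI_nonneg_bounded[where x = 1])
    (auto simp: sqrt_coeff_nonneg sqrt_coeff_sum_le_1[unfolded sqrt_coeff_sum_def])

text \<open>The limit \<open>L\<close> satisfies \<open>L\<^sup>2 \<le> 2 L - 1\<close>, i.e. \<open>g(1) = 1\<close>.\<close>

lemma suminf_sqrt_coeff: "suminf sqrt_coeff = 1"
proof -
  define L where "L = suminf sqrt_coeff"
  have lim: "sqrt_coeff_sum \<longlonglongrightarrow> L"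
    unfolding sqrt_coeff_sum_def L_def by (rule summable_LIMSEQ[OF summable_sqrt_coeff])
  have "(\<lambda>M. sqrt_coeff_sum (2 * M)) \<longlonglongrightarrow> L"
    using LIMSEQ_subseq_LIMSEQ[OF lim, of "\<lambda>M. 2 * M"] by (simp add: strict_mono_def o_def)
  then have lim2: "(\<lambda>M. 2 * sqrt_coeff_sum (2 * M) - 1) \<longlonglongrightarrow> 2 * L - 1"
    by (intro tendsto_intros)
  have "eventually (\<lambda>M. (sqrt_coeff_sum M)\<^sup>2 \<le> 2 * sqrt_coeff_sum (2 * M) - 1) sequentially"
  proof (rule eventually_sequentiallyI[of 1])
    fix M :: nat
    assume "1 \<le> M"
    have "(sqrt_coeff_sum M)\<^sup>2 \<le> (\<Sum>(i,j)\<in>{(i,j). i + j < 2 * M}. sqrt_coeff i * sqrt_coeff j)"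
      unfolding sqrt_coeff_square_sum[symmetric]
      by (rule sum_mono2) (auto simp: finite_triangle sqrt_coeff_nonneg)
    with \<open>1 \<le> M\<close> show "(sqrt_coeff_sum M)\<^sup>2 \<le> 2 * sqrt_coeff_sum (2 * M) - 1"
      by (simp add: sqrt_coeff_triangle_sum)
  qed
  with lim lim2 have "L\<^sup>2 \<le> 2 * L - 1" by (intro tendsto_le[OF _ lim2]) (auto intro: tendsto_intros)
  then have "(L - 1)\<^sup>2 \<le> 0" by (simp add: power2_eq_square algebra_simps)
  then show ?thesis by (simp add: L_def)
qed

lemma sqrt_coeff_sum_tendsto: "sqrt_coeff_sum \<longlonglongrightarrow> 1"
  using summable_LIMSEQ[OF summable_sqrt_coeff] suminf_sqrt_coeff
  by (simp add: sqrt_coeff_sum_def[abs_def])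

lemma sqrt_coeff_defect_tendsto:
  "(\<lambda>N. (sqrt_coeff_sum N)\<^sup>2 - (2 * sqrt_coeff_sum N - (if N \<ge> 2 then 1 else 0))) \<longlonglongrightarrow> 0"
proof -
  have "(\<lambda>N. (sqrt_coeff_sum N)\<^sup>2 - (2 * sqrt_coeff_sum N - 1)) \<longlonglongrightarrow> 1\<^sup>2 - (2 * 1 - 1)"
    using sqrt_coeff_sum_tendsto by (intro tendsto_intros)
  moreover have "eventually (\<lambda>N. (sqrt_coeff_sum N)\<^sup>2 - (2 * sqrt_coeff_sum N - 1) =
      (sqrt_coeff_sum N)\<^sup>2 - (2 * sqrt_coeff_sum N - (if N \<ge> 2 then 1 else 0))) sequentially"
    by (rule eventually_sequentiallyI[of 2]) simp
  ultimately show ?thesis by (simp add: Lim_transform_eventually)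
qed

lemma funpow_contraction:
  fixes Y :: "'a::real_normed_vector \<Rightarrow> 'a"
  assumes "\<And>x. norm (Y x) \<le> norm x"
  shows "norm ((Y ^^ n) x) \<le> norm x"
  by (induction n) (auto intro: order_trans[OF assms])

lemma funpow_commute_apply: "(\<And>x. D (Y x) = Y (D x)) \<Longrightarrow> D ((Y ^^ n) x) = (Y ^^ n) (D x)"
  by (induction n) auto

text \<open>For an effect \<open>Y\<close>, \<open>id - Y = (id - G)\<^sup>2\<close> with \<open>G = g(Y)\<close>, \<open>g\<close> the series of
  \<open>1 - sqrt (1 - t)\<close>; the series converges in norm since \<open>Y\<close> is a contraction.\<close>

locale sqrt_series =
  fixes Y :: "'h::chilbert_space \<Rightarrow> 'h"
  assumes effect_Y: "effect Y"
begin

lemma bounded_op_Y_power: "bounded_op (Y ^^ n)"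
  by (rule bounded_op_funpow[OF effect_bounded_op[OF effect_Y]])

lemma norm_Y_power_le: "norm ((Y ^^ n) x) \<le> norm x"
  by (rule funpow_contraction) (rule effect_contraction[OF effect_Y])

definition series :: "'h \<Rightarrow> 'h" where
  "series x = (\<Sum>n. sqrt_coeff n *\<^sub>R (Y ^^ n) x)"

definition partial :: "nat \<Rightarrow> 'h \<Rightarrow> 'h" where
  "partial N x = (\<Sum>n<N. sqrt_coeff n *\<^sub>R (Y ^^ n) x)"

definition root :: "'h \<Rightarrow> 'h" where
  "root x = x - series x"

lemma norm_term_le: "norm (sqrt_coeff n *\<^sub>R (Y ^^ n) x) \<le> sqrt_coeff n * norm x"
  using mult_left_mono[OF norm_Y_power_le[of n x] sqrt_coeff_nonneg[of n]]
  by (simp add: abs_of_nonneg[OF sqrt_coeff_nonneg])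

lemma summable_norm_terms: "summable (\<lambda>n. norm (sqrt_coeff n *\<^sub>R (Y ^^ n) x))"
proof (rule summable_comparison_test'[where g = "\<lambda>n. sqrt_coeff n * norm x" and N = 0])
  show "norm (norm (sqrt_coeff n *\<^sub>R (Y ^^ n) x)) \<le> sqrt_coeff n * norm x" for n
    using norm_term_le[of n x] by simp
qed (rule summable_mult2[OF summable_sqrt_coeff])

lemma summable_terms: "summable (\<lambda>n. sqrt_coeff n *\<^sub>R (Y ^^ n) x)"
  by (rule summable_norm_cancel[OF summable_norm_terms])

lemma partial_tendsto: "(\<lambda>N. partial N x) \<longlonglongrightarrow> series x"
  unfolding partial_def series_def by (rule summable_LIMSEQ[OF summable_terms])

lemma norm_series_le: "norm (series x) \<le> norm x"
proof -
  have "norm (series x) \<le> (\<Sum>n. norm (sqrt_coeff n *\<^sub>R (Y ^^ n) x))"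
    unfolding series_def by (rule summable_norm[OF summable_norm_terms])
  also have "\<dots> \<le> (\<Sum>n. sqrt_coeff n * norm x)"
    by (rule suminf_le[OF norm_term_le summable_norm_terms summable_mult2[OF summable_sqrt_coeff]])
  also have "\<dots> = norm x" using suminf_mult2[OF summable_sqrt_coeff, of "norm x"] suminf_sqrt_coeff
    by simp
  finally show ?thesis .
qed

lemma norm_partial_le: "norm (partial N x) \<le> norm x"
proof -
  have "norm (partial N x) \<le> (\<Sum>n<N. sqrt_coeff n * norm x)"
    unfolding partial_def by (rule sum_norm_le) (rule norm_term_le)
  also have "\<dots> = sqrt_coeff_sum N * norm x" by (simp add: sqrt_coeff_sum_def sum_distrib_right)
  also have "\<dots> \<le> norm x"
    using sqrt_coeff_sum_le_1[of N] sqrt_coeff_sum_nonneg[of N] by (simp add: mult_left_le_one_le)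
  finally show ?thesis .
qed

lemma bounded_op_partial: "bounded_op (partial N)"
  using bounded_op_lincomb[of "{..<N}" "\<lambda>n. Y ^^ n" "\<lambda>n. complex_of_real (sqrt_coeff n)"]
  by (simp add: bounded_op_Y_power partial_def[abs_def] scaleR_scaleC)

lemma series_commute:
  assumes D: "bounded_op D" and comm: "\<And>x. D (Y x) = Y (D x)"
  shows "D (series x) = series (D x)"
proof -
  have "D (series x) = (\<Sum>n. D (sqrt_coeff n *\<^sub>R (Y ^^ n) x))"
    unfolding series_def
    by (rule bounded_linear.suminf[OF bounded_op_bounded_linear[OF D] summable_terms])
  also have "\<dots> = series (D x)"
    by (simp add: series_def bounded_op_scaleR[OF D] funpow_commute_apply[of D Y, OF comm])
  finally show ?thesis .
qed

lemma series_add: "series (x + y) = series x + series y"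
  unfolding series_def
  by (simp add: suminf_add[OF summable_terms summable_terms] bounded_op_add[OF bounded_op_Y_power]
      scaleR_add_right)

lemma series_scaleC: "series (c *\<^sub>C x) = c *\<^sub>C series x"
  by (rule series_commute[OF bounded_op_scaleC_right, symmetric])
    (simp add: bounded_op_scaleC[OF effect_bounded_op[OF effect_Y]])

lemma bounded_op_series: "bounded_op series"
  unfolding bounded_op_def using series_add series_scaleC norm_series_le
  by (auto intro!: exI[of _ 1])

lemma partial_square:
  "partial N (partial N x) =
     (\<Sum>(i,j)\<in>{..<N}\<times>{..<N}. (sqrt_coeff i * sqrt_coeff j) *\<^sub>R (Y ^^ (i + j)) x)"
proof -
  have "partial N (partial N x) =
      (\<Sum>i<N. \<Sum>j<N. (sqrt_coeff i * sqrt_coeff j) *\<^sub>R (Y ^^ (i + j)) x)"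
    by (simp add: partial_def bounded_op_sum[OF bounded_op_Y_power] funpow_add
        bounded_op_scaleR[OF bounded_op_Y_power] scaleR_sum_right)
  then show ?thesis by (simp add: sum.cartesian_product)
qed

lemma partial_triangle:
  "(\<Sum>(i,j)\<in>{(i,j). i + j < N}. (sqrt_coeff i * sqrt_coeff j) *\<^sub>R (Y ^^ (i + j)) x)
     = 2 *\<^sub>R partial N x - (if N \<ge> 2 then Y x else 0)"
proof -
  have "(\<Sum>(i,j)\<in>{(i,j). i + j < N}. (sqrt_coeff i * sqrt_coeff j) *\<^sub>R (Y ^^ (i + j)) x)
      = (\<Sum>n<N. \<Sum>i\<le>n. (sqrt_coeff i * sqrt_coeff (n - i)) *\<^sub>R (Y ^^ (i + (n - i))) x)"
    by (rule sum.triangle_reindex)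
  also have "\<dots> = (\<Sum>n<N. (\<Sum>i\<le>n. sqrt_coeff i * sqrt_coeff (n - i)) *\<^sub>R (Y ^^ n) x)"
    by (simp add: scaleR_sum_left)
  also have "\<dots> = (\<Sum>n<N. (2 * sqrt_coeff n) *\<^sub>R (Y ^^ n) x - (if n = 1 then Y x else 0))"
    by (intro sum.cong refl) (simp add: sqrt_coeff_convolution scaleR_diff_left)
  also have "\<dots> = 2 *\<^sub>R partial N x - (if N \<ge> 2 then Y x else 0)"
    by (simp add: sum_subtractf partial_def scaleR_sum_right sum.delta')
  finally show ?thesis .
qed

lemma norm_partial_square_defect_le:
  "norm (partial N (partial N x) - (2 *\<^sub>R partial N x - (if N \<ge> 2 then Y x else 0)))
     \<le> norm x * ((sqrt_coeff_sum N)\<^sup>2 - (2 * sqrt_coeff_sum N - (if N \<ge> 2 then 1 else 0)))"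
proof -
  define A where "A = {..<N} \<times> {..<N}"
  define T where "T = {(i,j). i + j < N}"
  define f where "f = (\<lambda>(i,j). (sqrt_coeff i * sqrt_coeff j) *\<^sub>R (Y ^^ (i + j)) x)"
  define g where "g = (\<lambda>(i,j). sqrt_coeff i * sqrt_coeff j)"
  have fin: "finite A" and sub: "T \<subseteq> A" by (auto simp: A_def T_def)
  have "partial N (partial N x) - (2 *\<^sub>R partial N x - (if N \<ge> 2 then Y x else 0))
      = sum f A - sum f T"
    using partial_square[where N=N and x=x] partial_triangle[where N=N and x=x]
    by (simp add: A_def T_def f_def)
  also have "\<dots> = sum f (A - T)" by (rule sum_diff[OF fin sub, symmetric])
  finally have "norm (partial N (partial N x) - (2 *\<^sub>R partial N x - (if N \<ge> 2 then Y x else 0)))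
      = norm (sum f (A - T))" by simp
  also have "norm (sum f (A - T)) \<le> (\<Sum>p\<in>A - T. g p * norm x)"
    by (rule sum_norm_le)
      (auto simp: f_def g_def abs_of_nonneg sqrt_coeff_nonneg norm_Y_power_le mult_left_mono)
  also have "\<dots> = norm x * (sum g A - sum g T)"
    by (simp add: sum_diff[OF fin sub] sum_distrib_left[symmetric] mult.commute right_diff_distrib)
  finally show ?thesis
    unfolding g_def A_def T_def sqrt_coeff_square_sum sqrt_coeff_triangle_sum .
qed

lemma partial_square_tendsto: "(\<lambda>N. partial N (partial N x)) \<longlonglongrightarrow> series (series x)"
proof -
  have bound: "norm (partial N (partial N x) - series (series x))
      \<le> norm (partial N x - series x) + norm (partial N (series x) - series (series x))" for N
  proof -
    have "partial N (partial N x) - series (series x)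
        = partial N (partial N x - series x) + (partial N (series x) - series (series x))"
      by (simp add: bounded_op_diff[OF bounded_op_partial])
    then show ?thesis by (metis norm_partial_le norm_triangle_le add_right_mono)
  qed
  have "(\<lambda>N. norm (partial N x - series x) + norm (partial N (series x) - series (series x)))
      \<longlonglongrightarrow> 0"
    using partial_tendsto[of x] partial_tendsto[of "series x"]
    by (simp add: tendsto_add_zero LIM_zero tendsto_norm_zero)
  then have "(\<lambda>N. partial N (partial N x) - series (series x)) \<longlonglongrightarrow> 0"
    by (rule Lim_null_comparison[OF always_eventually, OF allI, OF bound])
  then show ?thesis by (simp add: LIM_zero_iff)
qed

lemma series_square: "series (series x) = 2 *\<^sub>R series x - Y x"
proof -
  define b where "b N = 2 *\<^sub>R partial N x - (if N \<ge> 2 then Y x else 0)" for N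
  have "(\<lambda>N. 2 *\<^sub>R partial N x - Y x) \<longlonglongrightarrow> 2 *\<^sub>R series x - Y x"
    by (intro tendsto_intros partial_tendsto)
  moreover have "eventually (\<lambda>N. 2 *\<^sub>R partial N x - Y x = b N) sequentially"
    by (rule eventually_sequentiallyI[of 2]) (simp add: b_def)
  ultimately have lim_b: "b \<longlonglongrightarrow> 2 *\<^sub>R series x - Y x"
    by (rule Lim_transform_eventually)
  have "(\<lambda>N. partial N (partial N x) - b N) \<longlonglongrightarrow> 0"
  proof (rule Lim_null_comparison)
    show "\<forall>\<^sub>F N in sequentially. norm (partial N (partial N x) - b N) \<le> norm x *
        ((sqrt_coeff_sum N)\<^sup>2 - (2 * sqrt_coeff_sum N - (if N \<ge> 2 then 1 else 0)))"
      by (simp add: b_def norm_partial_square_defect_le)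
    show "(\<lambda>N. norm x * ((sqrt_coeff_sum N)\<^sup>2 - (2 * sqrt_coeff_sum N
        - (if N \<ge> 2 then 1 else 0)))) \<longlonglongrightarrow> 0"
      using tendsto_mult_right_zero[OF sqrt_coeff_defect_tendsto] .
  qed
  then have "(\<lambda>N. partial N (partial N x)) \<longlonglongrightarrow> 2 *\<^sub>R series x - Y x"
    using tendsto_add[OF _ lim_b] by fastforce
  then show ?thesis by (rule LIMSEQ_unique[OF partial_square_tendsto])
qed

lemma root_square: "root (root x) = x - Y x"
  by (simp add: root_def bounded_op_diff[OF bounded_op_series] series_square scaleR_2 algebra_simps)

lemma root_commute:
  "bounded_op D \<Longrightarrow> (\<And>x. D (Y x) = Y (D x)) \<Longrightarrow> D (root x) = root (D x)"
  by (simp add: root_def bounded_op_diff series_commute)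

lemma positive_op_root: "positive_op root"
proof -
  have "Im (cinner x (root x)) = 0 \<and> 0 \<le> Re (cinner x (root x))" for x
  proof -
    have s: "(\<lambda>n. complex_of_real (sqrt_coeff n) * cinner x ((Y ^^ n) x)) sums cinner x (series x)"
      using bounded_linear.sums[OF bounded_linear_cinner_right summable_sums[OF summable_terms]]
      by (simp add: series_def cinner_scaleR_right)
    have real: "Im (cinner x ((Y ^^ n) x)) = 0" for n
      using arg_cong[OF selfadjoint_opD[OF selfadjoint_op_funpow, of Y n x x], of Im]
        effect_selfadjoint[OF effect_Y] cinner_cnj[of "(Y ^^ n) x" x] by simp
    have "(\<lambda>n. 0) sums Im (cinner x (series x))"
      using bounded_linear.sums[OF bounded_linear_Im s] by (simp add: real)
    then have im: "Im (cinner x (series x)) = 0" using sums_unique sums_zero by fastforce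
    have "Re (cinner x ((Y ^^ n) x)) \<le> (norm x)\<^sup>2" for n
      using complex_Re_le_cmod[of "cinner x ((Y ^^ n) x)"] cinner_Cauchy_Schwarz[of x "(Y ^^ n) x"]
        mult_left_mono[OF norm_Y_power_le[of n x], of "norm x"]
      by (simp add: power2_eq_square)
    then have "sqrt_coeff n * Re (cinner x ((Y ^^ n) x)) \<le> sqrt_coeff n * (norm x)\<^sup>2" for n
      by (rule mult_left_mono[OF _ sqrt_coeff_nonneg])
    moreover have "(\<lambda>n. sqrt_coeff n * Re (cinner x ((Y ^^ n) x))) sums Re (cinner x (series x))"
      using bounded_linear.sums[OF bounded_linear_Re s] by simp
    moreover have "(\<lambda>n. sqrt_coeff n * (norm x)\<^sup>2) sums (norm x)\<^sup>2"
      using sums_mult2[OF summable_sums[OF summable_sqrt_coeff]] suminf_sqrt_coeff by fastforce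
    ultimately have "Re (cinner x (series x)) \<le> (norm x)\<^sup>2" by (rule sums_le)
    with im show ?thesis by (simp add: root_def cinner_diff_right cinner_self)
  qed
  moreover have "bounded_op root"
    using bounded_op_op_minus[OF bounded_op_id bounded_op_series]
    by (simp add: op_minus_def root_def[abs_def])
  ultimately show ?thesis by (simp add: positive_op_def)
qed

end

lemma effect_sqrt_exists:
  assumes a: "effect a"
  shows "\<exists>S. positive_op S \<and> (\<forall>x. S (S x) = a x) \<and>
     (\<forall>D. bounded_op D \<longrightarrow> (\<forall>x. D (a x) = a (D x)) \<longrightarrow> (\<forall>x. D (S x) = S (D x)))"
proof -
  have "effect (\<lambda>x. x - a x)" using a by (simp add: effect_iff)
  then interpret sqrt_series "\<lambda>x. x - a x" by unfold_locales
  show ?thesis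
    using positive_op_root root_square root_commute by (auto simp: bounded_op_diff)
qed

lemma positive_op_scaled_effect:
  assumes P: "positive_op T"
  shows "\<exists>k>0. effect (\<lambda>x. (1 / k) *\<^sub>R T x)"
proof -
  obtain K where K: "K \<ge> 0" "\<And>x. norm (T x) \<le> K * norm x"
    using bounded_op_bound[OF positive_opD(1)[OF P]] by auto
  have "Re (cinner x (T x)) / (K + 1) \<le> (norm x)\<^sup>2" for x
  proof -
    have "Re (cinner x (T x)) \<le> norm x * norm (T x)"
      using complex_Re_le_cmod order_trans cinner_Cauchy_Schwarz by blast
    also have "\<dots> \<le> (K + 1) * (norm x)\<^sup>2"
      using mult_left_mono[OF K(2)[of x] norm_ge_zero[of x]] K(1)
      by (simp add: power2_eq_square algebra_simps add_increasing)
    finally show ?thesis using K(1) by (simp add: divide_le_eq mult.commute)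
  qed
  moreover have "positive_op (\<lambda>x. (1 / (K + 1)) *\<^sub>R T x)"
    using K(1) by (intro positive_op_scaleR[OF P]) simp
  moreover have "bounded_op (\<lambda>x. x - (1 / (K + 1)) *\<^sub>R T x)"
    using bounded_op_op_minus[OF bounded_op_id positive_opD(1), OF calculation(2)]
    by (simp add: op_minus_def)
  ultimately have "effect (\<lambda>x. (1 / (K + 1)) *\<^sub>R T x)"
    using positive_opD(2)[OF P]
    by (simp add: effect_iff positive_op_def cinner_diff_right cinner_scaleR_right cinner_self)
  with K(1) show ?thesis by (intro exI[of _ "K + 1"]) simp
qed

lemma positive_sqrt_exists:
  assumes P: "positive_op T"
  shows "\<exists>S. positive_op S \<and> (\<forall>x. S (S x) = T x) \<and>
     (\<forall>D. bounded_op D \<longrightarrow> (\<forall>x. D (T x) = T (D x)) \<longrightarrow> (\<forall>x. D (S x) = S (D x)))"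
proof -
  obtain k where k: "k > 0" and e: "effect (\<lambda>x. (1 / k) *\<^sub>R T x)"
    using positive_op_scaled_effect[OF P] by auto
  then obtain S where S: "positive_op S" "\<And>x. S (S x) = (1 / k) *\<^sub>R T x"
    and comm: "\<And>D. bounded_op D \<Longrightarrow> \<forall>x. D ((1 / k) *\<^sub>R T x) = (1 / k) *\<^sub>R T (D x) \<Longrightarrow>
       \<forall>x. D (S x) = S (D x)"
    using effect_sqrt_exists[OF e] by blast
  note S_bounded = positive_opD(1)[OF S(1)]
  show ?thesis
  proof (intro exI conjI allI impI)
    show "positive_op (\<lambda>x. sqrt k *\<^sub>R S x)" using k by (intro positive_op_scaleR[OF S(1)]) simp
    show "sqrt k *\<^sub>R S (sqrt k *\<^sub>R S x) = T x" for x
      using k by (simp add: bounded_op_scaleR[OF S_bounded] S(2))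
    show "D (sqrt k *\<^sub>R S x) = sqrt k *\<^sub>R S (D x)"
      if D: "bounded_op D" and "\<forall>x. D (T x) = T (D x)" for D x
      using comm[OF D] that by (simp add: bounded_op_scaleR[OF D])
  qed
qed

text \<open>If \<open>s\<^sup>2 = r\<^sup>2\<close> for commuting positive \<open>s, r\<close> and \<open>y = s x - r x\<close>, then
  \<open>s y + r y = 0\<close>, so \<open>s y = r y = 0\<close> and \<open>\<langle>y, y\<rangle> = \<langle>s y, x\<rangle> - \<langle>r y, x\<rangle> = 0\<close>.\<close>

lemma positive_sqrt_unique:
  assumes ps: "positive_op s" and pr: "positive_op r"
    and comm: "\<And>x. s (r x) = r (s x)" and square: "\<And>x. s (s x) = r (r x)"
  shows "s = r"
proof
  fix x
  note bs = positive_opD(1)[OF ps] and br = positive_opD(1)[OF pr]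
  define y where "y = s x - r x"
  have "s y + r y = 0"
    by (simp add: y_def bounded_op_diff[OF bs] bounded_op_diff[OF br] comm square)
  then have "Re (cinner y (s y)) + Re (cinner y (r y)) = 0"
    by (metis cinner_add_right cinner_zero_right plus_complex.sel(1) zero_complex.sel(1))
  then have "s y = 0" and "r y = 0"
    using positive_opD(3)[OF ps, of y] positive_opD(3)[OF pr, of y]
      positive_op_kernelI[OF ps, of y] positive_op_kernelI[OF pr, of y] by linarith+
  moreover have "cinner y y = cinner (s y) x - cinner (r y) x"
    by (simp add: y_def cinner_diff_right selfadjoint_opD[OF positive_op_selfadjoint[OF ps]]
        selfadjoint_opD[OF positive_op_selfadjoint[OF pr]])
  ultimately have "y = 0" by simp
  then show "s x = r x" by (simp add: y_def)
qed

lemma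
  assumes P: "positive_op T"
  shows positive_op_sqrt: "positive_op (op_sqrt T)"
    and op_sqrt_square: "op_sqrt T (op_sqrt T x) = T x"
    and op_sqrt_commute:
      "\<And>D. bounded_op D \<Longrightarrow> (\<And>x. D (T x) = T (D x)) \<Longrightarrow> D (op_sqrt T x) = op_sqrt T (D x)"
    and op_sqrt_unique: "\<And>s. positive_op s \<Longrightarrow> (\<And>x. s (s x) = T x) \<Longrightarrow> op_sqrt T = s"
proof -
  obtain S where S: "positive_op S" "\<And>x. S (S x) = T x"
    and comm: "\<And>D. bounded_op D \<Longrightarrow> \<forall>x. D (T x) = T (D x) \<Longrightarrow> \<forall>x. D (S x) = S (D x)"
    using positive_sqrt_exists[OF P] by blast
  have unique: "s = S" if ps: "positive_op s" and square: "\<And>x. s (s x) = T x" for s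
  proof (rule positive_sqrt_unique[OF ps S(1)])
    have "\<forall>x. s (T x) = T (s x)" by (simp flip: square)
    with comm[OF positive_opD(1)[OF ps]] show "s (S x) = S (s x)" for x by simp
  qed (simp add: square S(2))
  have eq: "op_sqrt T = S"
    unfolding op_sqrt_def
  proof (rule the_equality)
    show "positive_op S \<and> S \<circ> S = T" using S by (auto simp: fun_eq_iff)
    show "s = S" if "positive_op s \<and> s \<circ> s = T" for s
      using that unique by (auto simp: fun_eq_iff)
  qed
  show "positive_op (op_sqrt T)" using S(1) eq by simp
  show "op_sqrt T (op_sqrt T x) = T x" using S(2) eq by simp
  show "D (op_sqrt T x) = op_sqrt T (D x)" if "bounded_op D" "\<And>x. D (T x) = T (D x)" for D
    using comm[OF that(1)] that(2) eq by simp
  show "op_sqrt T = s" if "positive_op s" "\<And>x. s (s x) = T x" for s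
    using unique[OF that] eq by simp
qed

lemma bounded_op_op_sqrt: "positive_op T \<Longrightarrow> bounded_op (op_sqrt T)"
  by (rule positive_opD(1)[OF positive_op_sqrt])

lemma selfadjoint_op_sqrt: "positive_op T \<Longrightarrow> selfadjoint_op (op_sqrt T)"
  by (rule positive_op_selfadjoint[OF positive_op_sqrt])

section \<open>Orthonormal bases\<close>

lemma summable_on_Cauchy:
  fixes f :: "'a \<Rightarrow> 'b::banach"
  assumes tail: "\<And>\<epsilon>. \<epsilon> > 0 \<Longrightarrow> \<exists>F0. finite F0 \<and> F0 \<subseteq> A \<and>
      (\<forall>F. finite F \<and> F \<subseteq> A - F0 \<longrightarrow> norm (sum f F) < \<epsilon>)"
  shows "f summable_on A"
proof -
  have "\<exists>P. eventually P (finite_subsets_at_top A) \<and>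
      (\<forall>F F'. P F \<and> P F' \<longrightarrow> dist (sum f F) (sum f F') < \<epsilon>)" if "\<epsilon> > 0" for \<epsilon>
  proof -
    obtain F0 where F0: "finite F0" "F0 \<subseteq> A"
      and small: "\<And>F. finite F \<Longrightarrow> F \<subseteq> A - F0 \<Longrightarrow> norm (sum f F) < \<epsilon> / 2"
      using tail[of "\<epsilon> / 2"] \<open>\<epsilon> > 0\<close> by auto
    define P where "P F \<longleftrightarrow> finite F \<and> F0 \<subseteq> F \<and> F \<subseteq> A" for F
    have "eventually P (finite_subsets_at_top A)"
      unfolding eventually_finite_subsets_at_top P_def using F0 by auto
    moreover have "dist (sum f F) (sum f F') < \<epsilon>" if "P F" "P F'" for F F'
    proof -
      have "sum f F - sum f F' = sum f (F - F0) - sum f (F' - F0)"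
        using that by (simp add: P_def sum_diff)
      then have "dist (sum f F) (sum f F') \<le> norm (sum f (F - F0)) + norm (sum f (F' - F0))"
        by (simp add: dist_norm norm_triangle_ineq4)
      also have "\<dots> < \<epsilon> / 2 + \<epsilon> / 2"
        using that by (intro add_strict_mono small) (auto simp: P_def)
      finally show ?thesis by simp
    qed
    ultimately show ?thesis by blast
  qed
  then have "cauchy_filter (filtermap (sum f) (finite_subsets_at_top A))"
    by (simp add: cauchy_filter_metric_filtermap)
  moreover have "complete (UNIV :: 'b set)"
    by (meson Cauchy_convergent UNIV_I complete_def convergent_def)
  ultimately obtain L where "(sum f \<longlongrightarrow> L) (finite_subsets_at_top A)"
    using complete_uniform[where S = UNIV] by (force simp: filterlim_def)
  then show ?thesis by (auto simp: summable_on_def has_sum_def)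
qed

lemma nonneg_summable_on_tail:
  fixes g :: "'a \<Rightarrow> real"
  assumes g: "g summable_on A" "\<And>x. x \<in> A \<Longrightarrow> 0 \<le> g x" and "\<epsilon> > 0"
  shows "\<exists>F0. finite F0 \<and> F0 \<subseteq> A \<and> (\<forall>F. finite F \<and> F \<subseteq> A - F0 \<longrightarrow> sum g F < \<epsilon>)"
proof -
  obtain F0 where F0: "finite F0" "F0 \<subseteq> A" "dist (sum g F0) (infsum g A) \<le> \<epsilon> / 2"
    using has_sum_finite_approximation[OF has_sum_infsum[OF g(1)], of "\<epsilon> / 2"] \<open>\<epsilon> > 0\<close> by auto
  have "sum g F < \<epsilon>" if "finite F" "F \<subseteq> A - F0" for F
  proof -
    have "sum g F0 + sum g F = sum g (F0 \<union> F)"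
      using that F0 by (subst sum.union_disjoint) auto
    also have "\<dots> \<le> infsum g A"
      using that F0 g by (intro finite_sum_le_infsum) auto
    moreover have "infsum g A - sum g F0 \<le> \<epsilon> / 2"
      using F0(3) unfolding dist_real_def by linarith
    ultimately show ?thesis using \<open>\<epsilon> > 0\<close> by linarith
  qed
  with F0 show ?thesis by blast
qed

definition orthonormal :: "'h::chilbert_space set \<Rightarrow> bool" where
  "orthonormal B \<longleftrightarrow> (\<forall>e\<in>B. cinner e e = 1) \<and> (\<forall>e\<in>B. \<forall>f\<in>B. e \<noteq> f \<longrightarrow> cinner e f = 0)"

lemma is_onb_orthonormal: "is_onb B \<Longrightarrow> orthonormal B"
  by (simp add: is_onb_def orthonormal_def)

lemma orthonormal_cinner:
  "orthonormal B \<Longrightarrow> e \<in> B \<Longrightarrow> f \<in> B \<Longrightarrow> cinner e f = (if e = f then 1 else 0)"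
  by (auto simp: orthonormal_def)

lemma orthonormal_chain_Union:
  assumes "C \<in> chains {B. orthonormal B}"
  shows "orthonormal (\<Union>C)"
  unfolding orthonormal_def
proof (intro conjI ballI impI)
  fix e assume "e \<in> \<Union>C"
  with assms show "cinner e e = 1" by (auto simp: chains_def orthonormal_def)
next
  fix e f assume "e \<in> \<Union>C" "f \<in> \<Union>C" "e \<noteq> f"
  then obtain X Y where "X \<in> C" "e \<in> X" "Y \<in> C" "f \<in> Y" by auto
  with assms obtain Z where "Z \<in> C" "e \<in> Z" "f \<in> Z"
    unfolding chains_def chain_subset_def by blast
  with assms \<open>e \<noteq> f\<close> show "cinner e f = 0" by (auto simp: chains_def orthonormal_def)
qed

text \<open>A maximal orthonormal set is complete: a nonzero vector orthogonal to it could be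
  normalised and added.\<close>

lemma is_onb_exists: "\<exists>B::'h::chilbert_space set. is_onb B"
proof -
  obtain M :: "'h set" where M: "orthonormal M"
    and max: "\<And>X. orthonormal X \<Longrightarrow> M \<subseteq> X \<Longrightarrow> X = M"
    using Zorn_Lemma[of "{B. orthonormal B}"] orthonormal_chain_Union by force
  have "x = 0" if orth: "\<forall>e\<in>M. cinner e x = 0" for x
  proof (rule ccontr)
    assume "x \<noteq> 0"
    define u where "u = complex_of_real (1 / norm x) *\<^sub>C x"
    have uu: "cinner u u = 1"
      using \<open>x \<noteq> 0\<close> by (simp add: u_def cinner_self norm_scaleC norm_divide)
    have ue: "cinner e u = 0" if "e \<in> M" for e
      using orth that by (simp add: u_def cinner_scaleC_right)
    then have eu: "cinner u e = 0" if "e \<in> M" for e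
      using that by (metis cinner_cnj complex_cnj_zero)
    have "orthonormal (insert u M)"
      using M uu ue eu unfolding orthonormal_def by auto
    then have "u \<in> M" using max[of "insert u M"] by auto
    with ue uu show False by fastforce
  qed
  with M show ?thesis by (auto simp: is_onb_def orthonormal_def)
qed

lemma is_onb_some_onb: "is_onb (some_onb :: 'h::chilbert_space set)"
  unfolding some_onb_def using is_onb_exists by (rule someI_ex)

lemma orthonormal_cinner_sum:
  assumes on: "orthonormal B" and F: "finite F" "F \<subseteq> B"
  shows "cinner (\<Sum>e\<in>F. c e *\<^sub>C e) (\<Sum>e\<in>F. d e *\<^sub>C e) = (\<Sum>e\<in>F. cnj (c e) * d e)"
proof -
  have "cinner (\<Sum>e\<in>F. c e *\<^sub>C e) (\<Sum>f\<in>F. d f *\<^sub>C f)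
      = (\<Sum>e\<in>F. \<Sum>f\<in>F. cnj (c e) * (d f * cinner e f))"
  proof -
    have "cinner (\<Sum>e\<in>F. c e *\<^sub>C e) (\<Sum>f\<in>F. d f *\<^sub>C f)
        = (\<Sum>e\<in>F. cnj (c e) * cinner e (\<Sum>f\<in>F. d f *\<^sub>C f))"
      by (simp only: cinner_sum_left cinner_scaleC_left)
    then show ?thesis
      by (simp only: cinner_sum_right cinner_scaleC_right sum_distrib_left)
  qed
  also have "\<dots> = (\<Sum>e\<in>F. \<Sum>f\<in>F. if f = e then cnj (c e) * d f else 0)"
  proof (intro sum.cong refl)
    fix e f assume "e \<in> F" "f \<in> F"
    with F have "e \<in> B" "f \<in> B" by auto
    then show "cnj (c e) * (d f * cinner e f) = (if f = e then cnj (c e) * d f else 0)"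
      by (simp add: orthonormal_cinner[OF on])
  qed
  finally show ?thesis using F by (simp add: sum.delta)
qed

lemma norm_orthonormal_sum:
  assumes "orthonormal B" "finite F" "F \<subseteq> B"
  shows "(norm (\<Sum>e\<in>F. c e *\<^sub>C e))\<^sup>2 = (\<Sum>e\<in>F. (cmod (c e))\<^sup>2)"
proof -
  have "complex_of_real ((norm (\<Sum>e\<in>F. c e *\<^sub>C e))\<^sup>2) = (\<Sum>e\<in>F. cnj (c e) * c e)"
    unfolding cinner_self[symmetric] by (rule orthonormal_cinner_sum[OF assms])
  also have "\<dots> = complex_of_real (\<Sum>e\<in>F. (cmod (c e))\<^sup>2)"
    unfolding of_real_sum complex_norm_square by (simp add: mult.commute)
  finally show ?thesis by (simp only: of_real_eq_iff)
qed

lemma Bessel_inequality: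
  assumes on: "orthonormal B" and F: "finite F" "F \<subseteq> B"
  shows "(\<Sum>e\<in>F. (cmod (cinner e v))\<^sup>2) \<le> (norm v)\<^sup>2"
proof -
  define s where "s = (\<Sum>e\<in>F. cinner e v *\<^sub>C e)"
  define N where "N = (\<Sum>e\<in>F. (cmod (cinner e v))\<^sup>2)"
  have ss: "cinner s s = complex_of_real N"
    using norm_orthonormal_sum[OF on F, of "\<lambda>e. cinner e v"] by (simp add: s_def N_def cinner_self)
  have sv: "cinner s v = complex_of_real N"
    unfolding s_def N_def of_real_sum complex_norm_square
    by (simp add: cinner_sum_left cinner_scaleC_left mult.commute)
  then have vs: "cinner v s = complex_of_real N"
    by (metis cinner_cnj complex_cnj_complex_of_real)
  have "0 \<le> Re (cinner (v - s) (v - s))" by (rule cinner_self_nonneg)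
  also have "cinner (v - s) (v - s) = cinner v v - complex_of_real N"
    by (simp add: cinner_diff_left cinner_diff_right ss sv vs)
  finally show ?thesis by (simp add: N_def cinner_self)
qed

lemma Bessel_summable:
  assumes "orthonormal B"
  shows "(\<lambda>e. (cmod (cinner e v))\<^sup>2) summable_on B"
  by (rule nonneg_bdd_above_summable_on)
    (use Bessel_inequality[OF assms] in \<open>auto intro!: bdd_aboveI[of _ "(norm v)\<^sup>2"]\<close>)

lemma summable_on_orthonormal_expansion:
  assumes on: "orthonormal B"
  shows "(\<lambda>e. cinner e v *\<^sub>C e) summable_on B"
proof (rule summable_on_Cauchy)
  fix \<epsilon> :: real assume "\<epsilon> > 0"
  then obtain F0 where F0: "finite F0" "F0 \<subseteq> B"
    and tail: "\<And>F. finite F \<Longrightarrow> F \<subseteq> B - F0 \<Longrightarrow> (\<Sum>e\<in>F. (cmod (cinner e v))\<^sup>2) < \<epsilon>\<^sup>2"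
    using nonneg_summable_on_tail[OF Bessel_summable[OF on, of v], of "\<epsilon>\<^sup>2"] by auto
  have "norm (\<Sum>e\<in>F. cinner e v *\<^sub>C e) < \<epsilon>" if "finite F" "F \<subseteq> B - F0" for F
  proof (rule power_less_imp_less_base)
    have "F \<subseteq> B" using that by auto
    then show "(norm (\<Sum>e\<in>F. cinner e v *\<^sub>C e))\<^sup>2 < \<epsilon>\<^sup>2"
      using norm_orthonormal_sum[OF on \<open>finite F\<close>] tail[OF that] by simp
  qed (use \<open>\<epsilon> > 0\<close> in simp)
  with F0 show "\<exists>F0. finite F0 \<and> F0 \<subseteq> B \<and>
      (\<forall>F. finite F \<and> F \<subseteq> B - F0 \<longrightarrow> norm (\<Sum>e\<in>F. cinner e v *\<^sub>C e) < \<epsilon>)"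
    by blast
qed

lemma onb_expansion:
  assumes onb: "is_onb B"
  shows "((\<lambda>e. cinner e v *\<^sub>C e) has_sum v) B"
proof -
  note on = is_onb_orthonormal[OF onb]
  obtain w where w: "((\<lambda>e. cinner e v *\<^sub>C e) has_sum w) B"
    using summable_on_orthonormal_expansion[OF on] by (auto simp: summable_on_def)
  have "cinner e' w = cinner e' v" if "e' \<in> B" for e'
  proof (rule has_sum_unique)
    show "((\<lambda>e. cinner e' (cinner e v *\<^sub>C e)) has_sum cinner e' w) B"
      by (rule has_sum_bounded_linear[OF bounded_linear_cinner_right w])
    show "((\<lambda>e. cinner e' (cinner e v *\<^sub>C e)) has_sum cinner e' v) B"
      using that by (intro has_sum_finite_neutralI[of "{e'}"])
        (auto simp: cinner_scaleC_right orthonormal_cinner[OF on])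
  qed
  then have "\<forall>e\<in>B. cinner e (v - w) = 0" by (simp add: cinner_diff_right)
  then have "v - w = 0" using onb unfolding is_onb_def by blast
  with w show ?thesis by simp
qed

lemma Parseval_cinner:
  assumes "is_onb B"
  shows "((\<lambda>e. cinner x e * cinner e y) has_sum cinner x y) B"
  using has_sum_bounded_linear[OF bounded_linear_cinner_right[of x] onb_expansion[OF assms, of y]]
  by (simp add: cinner_scaleC_right mult.commute)

lemma Parseval_norm:
  assumes "is_onb B"
  shows "((\<lambda>e. (cmod (cinner e v))\<^sup>2) has_sum (norm v)\<^sup>2) B"
  using has_sum_bounded_linear[OF bounded_linear_Re Parseval_cinner[OF assms, of v v]]
  by (simp add: cinner_conj_mult cinner_self cmod_cinner_commute[of v])

section \<open>The trace\<close>

lemma adjoint_op_selfadjoint: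
  assumes "selfadjoint_op T"
  shows "adjoint_op T = T"
  unfolding adjoint_op_def
proof (rule the_equality)
  show "\<forall>x y. cinner (T x) y = cinner x (T y)" using assms by (simp add: selfadjoint_op_def)
  show "S = T" if S: "\<forall>x y. cinner (S x) y = cinner x (T y)" for S
  proof
    fix x
    have "cinner (S x - T x) y = 0" for y
      using S assms by (simp add: cinner_diff_left selfadjoint_op_def)
    from this[of "S x - T x"] show "S x = T x" by simp
  qed
qed

lemma abs_op_positive: "positive_op T \<Longrightarrow> abs_op T = T"
  by (simp add: abs_op_def adjoint_op_selfadjoint positive_op_selfadjoint op_sqrt_unique
      positive_op_comp_self)

lemma trace_class_positive_iff:
  "positive_op T \<Longrightarrow> trace_class T \<longleftrightarrow> (\<lambda>e. cinner e (T e)) summable_on some_onb"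
  by (simp add: trace_class_def abs_op_positive positive_op_def)

definition rank_one :: "'h::chilbert_space \<Rightarrow> 'h \<Rightarrow> 'h" where
  "rank_one v x = cinner v x *\<^sub>C v"

lemma bounded_op_rank_one: "bounded_op (rank_one v)"
proof (rule bounded_opI)
  show "bounded_linear (rank_one v)"
    unfolding rank_one_def[abs_def]
    by (rule bounded_linear_compose[OF bounded_linear_scaleC_left bounded_linear_cinner_right])
qed (simp add: rank_one_def cinner_scaleC_right)

lemma cinner_rank_one: "cinner x (rank_one v x) = complex_of_real ((cmod (cinner v x))\<^sup>2)"
  by (simp add: rank_one_def cinner_scaleC_right cinner_conj_mult mult.commute)

lemma positive_op_rank_one: "positive_op (rank_one v)"
  by (simp add: positive_op_def bounded_op_rank_one cinner_rank_one)

lemma effect_rank_one: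
  assumes "norm v = 1"
  shows "effect (rank_one v)"
proof -
  have "(cmod (cinner v x))\<^sup>2 \<le> (norm x)\<^sup>2" for x
    using cinner_Cauchy_Schwarz[of v x] assms by (simp add: power_mono)
  moreover have "bounded_op (\<lambda>x. x - rank_one v x)"
    using bounded_op_op_minus[OF bounded_op_id bounded_op_rank_one] by (simp add: op_minus_def)
  ultimately show ?thesis
    by (simp add: effect_iff bounded_op_rank_one positive_op_def cinner_diff_right
        cinner_rank_one cinner_self)
qed

lemma has_sum_trace_rank_one_comp:
  assumes X: "bounded_op X"
  shows "((\<lambda>e. cinner e ((rank_one v \<circ> X) e)) has_sum cinner v (X v)) some_onb"
proof -
  have "bounded_linear (\<lambda>y. cinner v (X y))"
    by (rule bounded_linear_compose[OF bounded_linear_cinner_right bounded_op_bounded_linear[OF X]])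
  from has_sum_bounded_linear[OF this onb_expansion[OF is_onb_some_onb]]
  show ?thesis
    by (simp add: rank_one_def bounded_op_scaleC[OF X] cinner_scaleC_right mult.commute)
qed

lemma trace_rank_one_comp: "bounded_op X \<Longrightarrow> trace (rank_one v \<circ> X) = cinner v (X v)"
  unfolding trace_def by (rule infsumI[OF has_sum_trace_rank_one_comp])

lemma state_rank_one:
  assumes "norm v = 1"
  shows "state (rank_one v)"
  using trace_rank_one_comp[OF bounded_op_id, of v] effect_rank_one[OF assms] assms
  by (simp add: state_def cinner_self)

lemma trace_class_rank_one: "trace_class (rank_one v)"
  using has_sum_trace_rank_one_comp[OF bounded_op_id, of v]
  by (auto simp: trace_class_positive_iff[OF positive_op_rank_one] summable_on_def)

lemma Hilbert_Schmidt_op_sqrt: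
  assumes "positive_op T" "trace_class T"
  shows "(\<lambda>e. (norm (op_sqrt T e))\<^sup>2) summable_on some_onb"
proof -
  have "cinner e (T e) = complex_of_real ((norm (op_sqrt T e))\<^sup>2)" for e
    using selfadjoint_opD[OF selfadjoint_op_sqrt[OF assms(1)], of e "op_sqrt T e"]
    by (simp add: op_sqrt_square[OF assms(1)] cinner_self)
  with summable_on_bounded_linear[OF bounded_linear_Re, of "\<lambda>e. cinner e (T e)"] assms
  show ?thesis by (simp add: trace_class_positive_iff)
qed

text \<open>Parseval for \<open>\<Sum>\<^sub>e \<Sum>\<^sub>f |\<langle>e, A f\<rangle>|\<^sup>2\<close> summed in both orders: \<open>A\<close> and its
  adjoint \<open>A'\<close> have the same Hilbert--Schmidt norm.\<close>

lemma Hilbert_Schmidt_adjoint: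
  assumes onb: "is_onb B" and adj: "\<And>e f. cinner e (A f) = cinner (A' e) f"
    and hs: "(\<lambda>f. (norm (A f))\<^sup>2) summable_on B"
  shows "(\<lambda>e. (norm (A' e))\<^sup>2) summable_on B"
proof -
  define h where "h = (\<lambda>(f, e). (cmod (cinner e (A f)))\<^sup>2)"
  have "h summable_on B \<times> B"
    using summable_on_SigmaI[where A = B and B = "\<lambda>_. B", OF _ hs]
    by (simp add: h_def Parseval_norm[OF onb])
  then have swapped: "((\<lambda>(e, f). h (f, e)) has_sum infsum h (B \<times> B)) (B \<times> B)"
    by (simp add: has_sum_swap[symmetric])
  have "((\<lambda>f. h (f, e)) has_sum (norm (A' e))\<^sup>2) B" for e
    using Parseval_norm[OF onb, of "A' e"] by (simp add: h_def adj cmod_cinner_commute)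
  then have "((\<lambda>e. (norm (A' e))\<^sup>2) has_sum infsum h (B \<times> B)) B"
    by (intro has_sum_SigmaD[where A = B and B = "\<lambda>_. B", OF swapped]) simp
  then show ?thesis by (auto simp: summable_on_def)
qed

lemma summable_on_Parseval_product:
  assumes onb: "is_onb B"
    and R: "(\<lambda>e. (norm (R e))\<^sup>2) summable_on B" and S: "(\<lambda>e. (norm (S e))\<^sup>2) summable_on B"
  shows "(\<lambda>(e, f). cinner (R e) f * cinner f (S e)) summable_on B \<times> B"
proof -
  have square: "(\<lambda>p. (cmod (cinner (snd p) (U (fst p))))\<^sup>2) summable_on B \<times> B"
    if "(\<lambda>e. (norm (U e))\<^sup>2) summable_on B" for U
    by (rule summable_on_SigmaI[where A = B and B = "\<lambda>_. B", OF _ that])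
      (simp_all add: Parseval_norm[OF onb])
  define x where "x = (\<lambda>(e, f). cinner (R e) f)"
  define y where "y = (\<lambda>(e, f). cinner f (S e))"
  have eq: "(\<lambda>p. norm (x p * x p)) = (\<lambda>p. (cmod (cinner (snd p) (R (fst p))))\<^sup>2)"
    "(\<lambda>p. norm (y p * y p)) = (\<lambda>p. (cmod (cinner (snd p) (S (fst p))))\<^sup>2)"
    by (simp_all add: fun_eq_iff x_def y_def case_prod_beta norm_mult cmod_cinner_commute
        power2_eq_square)
  have "(\<lambda>p. norm (x p * x p)) summable_on B \<times> B" "(\<lambda>p. norm (y p * y p)) summable_on B \<times> B"
    unfolding eq by (fact square[OF R], fact square[OF S])
  then have "(\<lambda>p. x p * y p) summable_on B \<times> B"
    by (rule abs_summable_summable[OF abs_summable_product])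
  moreover have "(\<lambda>p. x p * y p) = (\<lambda>(e, f). cinner (R e) f * cinner f (S e))"
    by (auto simp: x_def y_def)
  ultimately show ?thesis by simp
qed

lemma Hilbert_Schmidt_op_sqrt_comp:
  assumes P: "positive_op T" "trace_class T" and X: "bounded_op X" "selfadjoint_op X"
  shows "(\<lambda>e. (norm (op_sqrt T (X e)))\<^sup>2) summable_on some_onb"
proof (rule Hilbert_Schmidt_adjoint[OF is_onb_some_onb, where A = "\<lambda>f. X (op_sqrt T f)"])
  show "cinner e (X (op_sqrt T f)) = cinner (op_sqrt T (X e)) f" for e f
    by (simp add: selfadjoint_opD[OF X(2), symmetric]
        selfadjoint_opD[OF selfadjoint_op_sqrt[OF P(1)]])
  obtain K where "\<And>x. norm (X x) \<le> K * norm x" "K \<ge> 0" using bounded_op_bound[OF X(1)] by auto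
  then have "(norm (X (op_sqrt T f)))\<^sup>2 \<le> K\<^sup>2 * (norm (op_sqrt T f))\<^sup>2" for f
    by (metis norm_ge_zero power_mono power_mult_distrib)
  then show "(\<lambda>f. (norm (X (op_sqrt T f)))\<^sup>2) summable_on some_onb"
    by (intro summable_on_comparison_test[OF
          summable_on_cmult_right[OF Hilbert_Schmidt_op_sqrt[OF P]]]) auto
qed

text \<open>With \<open>R = sqrt T\<close>, both \<open>tr (T X)\<close> and \<open>\<Sum>\<^sub>f \<langle>X R f, R f\<rangle>\<close> are iterated sums of
  the absolutely summable family \<open>\<langle>R e, f\<rangle> \<langle>f, R X e\<rangle>\<close>.\<close>

lemma has_sum_trace_comp:
  assumes P: "positive_op T" "trace_class T" and X: "bounded_op X" "selfadjoint_op X"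
  shows "((\<lambda>e. cinner e (T (X e))) has_sum trace (T \<circ> X)) some_onb"
    and "((\<lambda>f. cinner (X (op_sqrt T f)) (op_sqrt T f)) has_sum trace (T \<circ> X)) some_onb"
proof -
  define B where "B = (some_onb :: 'a set)"
  define R where "R = op_sqrt T"
  have onb: "is_onb B" unfolding B_def by (rule is_onb_some_onb)
  have R_sa: "selfadjoint_op R" unfolding R_def by (rule selfadjoint_op_sqrt[OF P(1)])
  have R_sq: "R (R x) = T x" for x unfolding R_def by (rule op_sqrt_square[OF P(1)])
  define F where "F = (\<lambda>(e, f). cinner (R e) f * cinner f (R (X e)))"
  have "F summable_on B \<times> B"
    unfolding F_def B_def R_def
    by (rule summable_on_Parseval_product[OF is_onb_some_onb Hilbert_Schmidt_op_sqrt[OF P]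
          Hilbert_Schmidt_op_sqrt_comp[OF P X]])
  then have F: "(F has_sum infsum F (B \<times> B)) (B \<times> B)" by simp
  have "((\<lambda>f. F (e, f)) has_sum cinner e (T (X e))) B" for e
    using Parseval_cinner[OF onb, of "R e" "R (X e)"]
    by (simp add: F_def selfadjoint_opD[OF R_sa] R_sq)
  then have rows: "((\<lambda>e. cinner e (T (X e))) has_sum infsum F (B \<times> B)) B"
    by (rule has_sum_SigmaD[where A = B and B = "\<lambda>_. B", OF F])
  then have "trace (T \<circ> X) = infsum F (B \<times> B)" by (simp add: trace_def B_def infsumI)
  with rows show "((\<lambda>e. cinner e (T (X e))) has_sum trace (T \<circ> X)) some_onb"
    by (simp add: B_def)
  have "cinner f (R (X e)) = cinner (X (R f)) e" for e f
    by (simp add: selfadjoint_opD[OF R_sa, symmetric] selfadjoint_opD[OF X(2)])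
  then have "F (e, f) = cinner (X (R f)) e * cinner e (R f)" for e f
    by (simp add: F_def selfadjoint_opD[OF R_sa] mult.commute)
  then have cols: "((\<lambda>e. F (e, f)) has_sum cinner (X (R f)) (R f)) B" for f
    using Parseval_cinner[OF onb, of "X (R f)" "R f"] by simp
  have "((\<lambda>(f, e). F (e, f)) has_sum infsum F (B \<times> B)) (B \<times> B)"
    using F by (simp add: has_sum_swap[of F])
  then have "((\<lambda>f. cinner (X (R f)) (R f)) has_sum infsum F (B \<times> B)) B"
    by (rule has_sum_SigmaD[where A = B and B = "\<lambda>_. B"]) (simp add: cols)
  with \<open>trace (T \<circ> X) = infsum F (B \<times> B)\<close>
  show "((\<lambda>f. cinner (X (op_sqrt T f)) (op_sqrt T f)) has_sum trace (T \<circ> X)) some_onb"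
    by (simp add: B_def R_def)
qed

lemma trace_comp_nonneg:
  assumes "positive_op T" "trace_class T" and X: "positive_op X"
  shows "Im (trace (T \<circ> X)) = 0 \<and> 0 \<le> Re (trace (T \<circ> X))"
proof -
  note sum =
    has_sum_trace_comp(2)[OF assms(1,2) positive_opD(1)[OF X] positive_op_selfadjoint[OF X]]
  have "0 \<le> cinner (X (op_sqrt T f)) (op_sqrt T f)" for f
    using positive_opD(2,3)[OF X, of "op_sqrt T f"]
    by (simp add: selfadjoint_opD[OF positive_op_selfadjoint[OF X]] less_eq_complex_def)
  then have "0 \<le> infsum (\<lambda>f. cinner (X (op_sqrt T f)) (op_sqrt T f)) some_onb"
    using sum by (intro infsum_nonneg_complex) (auto simp: summable_on_def)
  then have "0 \<le> trace (T \<circ> X)" using infsumI[OF sum] by simp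
  then show ?thesis by (simp add: less_eq_complex_def)
qed

lemma has_sum_finite_sum:
  fixes f :: "'i \<Rightarrow> 'a \<Rightarrow> 'b::topological_comm_monoid_add"
  assumes "finite I" "\<And>i. i \<in> I \<Longrightarrow> (f i has_sum a i) A"
  shows "((\<lambda>x. \<Sum>i\<in>I. f i x) has_sum (\<Sum>i\<in>I. a i)) A"
  using assms by (induction I rule: finite_induct) (auto intro: has_sum_add)

lemma trace_comp_lincomb:
  assumes P: "positive_op T" "trace_class T" and "finite S"
    and X: "\<And>i. i \<in> S \<Longrightarrow> bounded_op (X i) \<and> selfadjoint_op (X i)"
  shows "trace (T \<circ> (\<lambda>x. \<Sum>i\<in>S. c i *\<^sub>C X i x)) = (\<Sum>i\<in>S. c i * trace (T \<circ> X i))"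
proof -
  have "((\<lambda>e. \<Sum>i\<in>S. c i * cinner e (T (X i e))) has_sum (\<Sum>i\<in>S. c i * trace (T \<circ> X i)))
      some_onb"
    using X by (intro has_sum_finite_sum \<open>finite S\<close> has_sum_cmult_right has_sum_trace_comp(1)[OF P])
      auto
  then show ?thesis
    unfolding trace_def
    using positive_opD(1)[OF P(1)]
    by (simp add: bounded_op_sum bounded_op_scaleC cinner_sum_right cinner_scaleC_right infsumI)
qed

lemma trace_comp_op_add:
  assumes P: "positive_op T" "trace_class T"
    and X: "bounded_op X" "selfadjoint_op X" and Y: "bounded_op Y" "selfadjoint_op Y"
  shows "trace (T \<circ> op_add X Y) = trace (T \<circ> X) + trace (T \<circ> Y)"
  using has_sum_add[OF has_sum_trace_comp(1)[OF P X] has_sum_trace_comp(1)[OF P Y]]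
  by (simp add: trace_def op_add_def bounded_op_add[OF positive_opD(1)[OF P(1)]] cinner_add_right
      infsumI)

section \<open>Dual instruments\<close>

locale instrument_dual =
  fixes M :: "'d measure" and I Is :: "'d set \<Rightarrow> ('h::chilbert_space \<Rightarrow> 'h) \<Rightarrow> ('h \<Rightarrow> 'h)"
  assumes instrument: "instrument M I" and dual: "dual_instrument M I Is"
begin

lemma trace_class_image_rank_one: "D \<in> sets M \<Longrightarrow> trace_class (I D (rank_one v))"
  using instrument trace_class_rank_one by (auto simp: instrument_def)

lemma positive_op_image_rank_one:
  assumes D: "D \<in> sets M"
  shows "positive_op (I D (rank_one v))"
proof -
  have "block_positive 1 (\<lambda>i j. rank_one v)"
    by (simp add: block_positive_def cinner_rank_one)
  with instrument D trace_class_rank_one[of v]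
  have "block_positive 1 (\<lambda>i j. I D (rank_one v))"
    by (auto simp: instrument_def completely_positive_def)
  then have "Im (cinner y (I D (rank_one v) y)) = 0 \<and> 0 \<le> Re (cinner y (I D (rank_one v) y))"
    for y
    unfolding block_positive_def by (drule_tac x = "\<lambda>_. y" in spec) simp
  moreover have "bounded_op (I D (rank_one v))"
    using trace_class_image_rank_one[OF D] by (simp add: trace_class_def)
  ultimately show ?thesis by (simp add: positive_op_def)
qed

lemma bounded_op_dual: "D \<in> sets M \<Longrightarrow> bounded_op X \<Longrightarrow> bounded_op (Is D X)"
  using dual by (simp add: dual_instrument_def)

lemma cinner_dual:
  assumes D: "D \<in> sets M" and X: "bounded_op X" and v: "norm v = 1"
  shows "cinner v (Is D X v) = trace (I D (rank_one v) \<circ> X)"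
proof -
  have "trace (rank_one v \<circ> Is D X) = trace (I D (rank_one v) \<circ> X)"
    using dual D X state_rank_one[OF v] by (simp add: dual_instrument_def)
  then show ?thesis by (simp add: trace_rank_one_comp[OF bounded_op_dual[OF D X]])
qed

lemma dual_lincomb:
  assumes D: "D \<in> sets M" and "finite S"
    and X: "\<And>i. i \<in> S \<Longrightarrow> bounded_op (X i) \<and> selfadjoint_op (X i)"
  shows "Is D (\<lambda>x. \<Sum>i\<in>S. c i *\<^sub>C X i x) = (\<lambda>x. \<Sum>i\<in>S. c i *\<^sub>C Is D (X i) x)"
proof (rule bounded_op_eqI_unit_quadratic)
  have bounded: "bounded_op (\<lambda>x. \<Sum>i\<in>S. c i *\<^sub>C X i x)"
    using X by (intro bounded_op_lincomb) auto
  then show "bounded_op (Is D (\<lambda>x. \<Sum>i\<in>S. c i *\<^sub>C X i x))" by (rule bounded_op_dual[OF D])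
  show "bounded_op (\<lambda>x. \<Sum>i\<in>S. c i *\<^sub>C Is D (X i) x)"
    using X by (intro bounded_op_lincomb bounded_op_dual[OF D]) auto
  fix u :: 'h assume u: "norm u = 1"
  have "trace (I D (rank_one u) \<circ> (\<lambda>x. \<Sum>i\<in>S. c i *\<^sub>C X i x))
      = (\<Sum>i\<in>S. c i * trace (I D (rank_one u) \<circ> X i))"
    by (rule trace_comp_lincomb[OF positive_op_image_rank_one[OF D]
          trace_class_image_rank_one[OF D] \<open>finite S\<close> X])
  with X show "cinner u (Is D (\<lambda>x. \<Sum>i\<in>S. c i *\<^sub>C X i x) u)
      = cinner u ((\<lambda>x. \<Sum>i\<in>S. c i *\<^sub>C Is D (X i) x) u)"
    by (simp add: cinner_dual[OF D _ u] bounded cinner_sum_right cinner_scaleC_right)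
qed

lemma dual_op_add:
  assumes D: "D \<in> sets M"
    and X: "bounded_op X" "selfadjoint_op X" and Y: "bounded_op Y" "selfadjoint_op Y"
  shows "Is D (op_add X Y) = op_add (Is D X) (Is D Y)"
proof (rule bounded_op_eqI_unit_quadratic)
  show "bounded_op (Is D (op_add X Y))"
    by (rule bounded_op_dual[OF D bounded_op_op_add[OF X(1) Y(1)]])
  show "bounded_op (op_add (Is D X) (Is D Y))"
    by (rule bounded_op_op_add[OF bounded_op_dual[OF D X(1)] bounded_op_dual[OF D Y(1)]])
  fix u :: 'h assume u: "norm u = 1"
  have "cinner u (Is D (op_add X Y) u) = trace (I D (rank_one u) \<circ> op_add X Y)"
    by (rule cinner_dual[OF D bounded_op_op_add[OF X(1) Y(1)] u])
  also have "\<dots> = trace (I D (rank_one u) \<circ> X) + trace (I D (rank_one u) \<circ> Y)"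
    by (rule trace_comp_op_add[OF positive_op_image_rank_one[OF D]
          trace_class_image_rank_one[OF D] X Y])
  also have "\<dots> = cinner u (op_add (Is D X) (Is D Y) u)"
    by (simp add: cinner_dual[OF D X(1) u] cinner_dual[OF D Y(1) u] op_add_def cinner_add_right)
  finally show "cinner u (Is D (op_add X Y) u) = cinner u (op_add (Is D X) (Is D Y) u)" .
qed

lemma positive_op_dual:
  assumes D: "D \<in> sets M" and X: "positive_op X"
  shows "positive_op (Is D X)"
proof (rule positive_opI_unit[OF bounded_op_dual[OF D positive_opD(1)[OF X]]])
  fix u :: 'h assume "norm u = 1"
  then show "Im (cinner u (Is D X u)) = 0 \<and> 0 \<le> Re (cinner u (Is D X u))"
    using trace_comp_nonneg[OF positive_op_image_rank_one[OF D] trace_class_image_rank_one[OF D] X]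
    by (simp add: cinner_dual[OF D positive_opD(1)[OF X]])
qed

lemma dual_mono:
  assumes D: "D \<in> sets M" and X: "bounded_op X" "selfadjoint_op X"
    and Y: "bounded_op Y" "selfadjoint_op Y" and le: "op_le X Y"
  shows "op_le (Is D X) (Is D Y)"
proof -
  have pos: "positive_op (op_minus Y X)" using le by (simp add: op_le_def)
  have "Y = op_add (op_minus Y X) X" by (simp add: op_add_def op_minus_def)
  then have "Is D Y = op_add (Is D (op_minus Y X)) (Is D X)"
    using dual_op_add[OF D positive_opD(1)[OF pos] positive_op_selfadjoint[OF pos] X] by simp
  then have "op_minus (Is D Y) (Is D X) = Is D (op_minus Y X)"
    by (simp add: op_add_def op_minus_def fun_eq_iff)
  with positive_op_dual[OF D pos] show ?thesis by (simp add: op_le_def)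
qed

lemma sub_obs_op_add:
  "bounded_op X \<Longrightarrow> selfadjoint_op X \<Longrightarrow> bounded_op Y \<Longrightarrow> selfadjoint_op Y \<Longrightarrow>
    sub_eq M (sub_obs Is (op_add X Y)) (sub_add (sub_obs Is X) (sub_obs Is Y))"
  by (simp add: sub_eq_def sub_obs_def sub_add_def dual_op_add)

lemma sub_obs_real_lincomb:
  "finite S \<Longrightarrow> (\<And>i. i \<in> S \<Longrightarrow> bounded_op (X i) \<and> selfadjoint_op (X i)) \<Longrightarrow>
    sub_eq M (sub_obs Is (\<lambda>x. \<Sum>i\<in>S. complex_of_real (r i) *\<^sub>C X i x))
      (\<lambda>\<Delta> x. \<Sum>i\<in>S. sub_scale (r i) (sub_obs Is (X i)) \<Delta> x)"
  by (simp add: sub_eq_def sub_obs_def sub_scale_def op_scale_def dual_lincomb)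

lemma sub_obs_mono:
  "bounded_op X \<Longrightarrow> selfadjoint_op X \<Longrightarrow> bounded_op Y \<Longrightarrow> selfadjoint_op Y \<Longrightarrow> op_le X Y \<Longrightarrow>
    sub_le M (sub_obs Is X) (sub_obs Is Y)"
  by (simp add: sub_le_def sub_obs_def dual_mono)

end

section \<open>The sequential product\<close>

lemma seqp_apply: "seqp a b x = op_sqrt a (b (op_sqrt a x))"
  by (simp add: seqp_def)

lemma bounded_op_seqp: "positive_op a \<Longrightarrow> bounded_op b \<Longrightarrow> bounded_op (seqp a b)"
  unfolding seqp_def by (intro bounded_op_comp bounded_op_op_sqrt)

lemma selfadjoint_op_seqp: "positive_op a \<Longrightarrow> selfadjoint_op b \<Longrightarrow> selfadjoint_op (seqp a b)"
  using selfadjoint_op_sqrt[of a] by (simp add: selfadjoint_op_def seqp_apply)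

lemma cinner_seqp: "positive_op a \<Longrightarrow> cinner x (seqp a b x) = cinner (op_sqrt a x) (b (op_sqrt a x))"
  by (simp add: seqp_apply selfadjoint_opD[OF selfadjoint_op_sqrt, symmetric])

lemma positive_op_seqp:
  assumes "positive_op a" "positive_op b"
  shows "positive_op (seqp a b)"
  using assms bounded_op_seqp[OF assms(1) positive_opD(1)[OF assms(2)]]
  by (simp add: positive_op_def cinner_seqp)

lemma seqp_op_add: "positive_op a \<Longrightarrow> seqp a (op_add b c) = op_add (seqp a b) (seqp a c)"
  by (simp add: fun_eq_iff seqp_apply op_add_def bounded_op_add[OF bounded_op_op_sqrt])

lemma seqp_lincomb:
  "positive_op a \<Longrightarrow>
    seqp a (\<lambda>x. \<Sum>i\<in>S. c i *\<^sub>C b i x) = (\<lambda>x. \<Sum>i\<in>S. c i *\<^sub>C seqp a (b i) x)"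
  by (simp add: fun_eq_iff seqp_apply bounded_op_sum[OF bounded_op_op_sqrt]
      bounded_op_scaleC[OF bounded_op_op_sqrt])

lemma op_sqrt_id: "op_sqrt (id :: 'h::chilbert_space \<Rightarrow> 'h) = id"
  by (rule op_sqrt_unique[OF positive_op_id positive_op_id]) simp

lemma seqp_id_left: "seqp id a = a"
  by (simp add: seqp_def op_sqrt_id)

lemma seqp_id_right: "positive_op a \<Longrightarrow> seqp a id = a"
  by (simp add: fun_eq_iff seqp_apply op_sqrt_square)

lemma seqp_mono:
  assumes a: "positive_op a" and le: "op_le b c"
  shows "op_le (seqp a b) (seqp a c)"
proof -
  have "positive_op (seqp a (\<lambda>x. c x - b x))" using a le by (simp add: positive_op_seqp op_le_iff)
  moreover have "seqp a (\<lambda>x. c x - b x) = (\<lambda>x. seqp a c x - seqp a b x)"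
    by (simp add: fun_eq_iff seqp_apply bounded_op_diff[OF bounded_op_op_sqrt[OF a]])
  ultimately show ?thesis by (simp add: op_le_iff)
qed

lemma seqp_le_left: "positive_op a \<Longrightarrow> effect b \<Longrightarrow> op_le (seqp a b) a"
  using seqp_mono[of a b id] by (simp add: seqp_id_right effect_iff op_le_iff)

lemma seqp_commute:
  assumes X: "positive_op X" and c: "positive_op c" and comm: "\<And>x. X (c x) = c (X x)"
  shows "seqp c X = seqp X c"
proof
  fix x
  have "seqp c X x = c (X x)"
    by (simp add: seqp_apply op_sqrt_commute[OF c positive_opD(1)[OF X] comm] op_sqrt_square[OF c])
  also have "\<dots> = seqp X c x"
    by (simp add: seqp_apply op_sqrt_commute[OF X positive_opD(1)[OF c] comm[symmetric], symmetric]
        op_sqrt_square[OF X])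
  finally show "seqp c X x = seqp X c x" .
qed

text \<open>If \<open>a \<circ> b = 0\<close> then \<open>\<parallel>\<surd>b \<surd>a x\<parallel>\<^sup>2 = \<langle>x, (a \<circ> b) x\<rangle> = 0\<close>, so \<open>\<surd>b \<surd>a = 0\<close> and,
  taking adjoints, \<open>\<surd>a \<surd>b = 0\<close>.\<close>

lemma seqp_eq_zero_commute:
  assumes a: "positive_op a" and b: "positive_op b" and zero: "seqp a b = op_zero"
  shows "seqp b a = op_zero"
proof -
  define sa sb where "sa = op_sqrt a" and "sb = op_sqrt b"
  have sa: "selfadjoint_op sa" and sb: "selfadjoint_op sb"
    unfolding sa_def sb_def using selfadjoint_op_sqrt a b by auto
  have "cinner (sb (sa x)) (sb (sa x)) = cinner x (seqp a b x)" for x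
  proof -
    have "cinner (sb (sa x)) (sb (sa x)) = cinner (sa x) (sb (sb (sa x)))"
      by (rule selfadjoint_opD[OF sb])
    also have "\<dots> = cinner x (sa (b (sa x)))"
      by (simp add: sb_def op_sqrt_square[OF b] selfadjoint_opD[OF sa])
    finally show ?thesis by (simp add: seqp_apply sa_def)
  qed
  then have ba: "sb (sa x) = 0" for x using zero by (simp add: op_zero_def)
  have "cinner y (sa (sb x)) = 0" for x y
    by (simp add: selfadjoint_opD[OF sa, symmetric] selfadjoint_opD[OF sb, symmetric] ba)
  then have ab: "sa (sb x) = 0" for x by (metis cinner_self_eq_0)
  have "seqp b a x = sb (sa (sa (sb x)))" for x
    by (simp add: seqp_apply sa_def sb_def op_sqrt_square[OF a])
  moreover have "sa 0 = 0" "sb 0 = 0"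
    unfolding sa_def sb_def using a b by (simp_all add: bounded_op_zero bounded_op_op_sqrt)
  ultimately show ?thesis by (simp add: fun_eq_iff op_zero_def ab)
qed

text \<open>For commuting \<open>a, b\<close>, \<open>\<surd>a \<surd>b\<close> is the positive square root of \<open>a \<circ> b\<close>.\<close>

lemma seqp_assoc:
  assumes a: "positive_op a" and b: "positive_op b" and ab: "a \<circ> b = b \<circ> a"
  shows "seqp a (seqp b c) = seqp (seqp a b) c"
proof -
  define sa sb where "sa = op_sqrt a" and "sb = op_sqrt b"
  have pa: "positive_op sa" and pb: "positive_op sb"
    unfolding sa_def sb_def using positive_op_sqrt a b by auto
  have ba: "b (a x) = a (b x)" for x using ab by (metis comp_apply)
  then have b_sa: "b (sa x) = sa (b x)" for x
    unfolding sa_def by (rule op_sqrt_commute[OF a positive_opD(1)[OF b]])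
  have sa_sb: "sa (sb x) = sb (sa x)" for x
    unfolding sb_def by (rule op_sqrt_commute[OF b positive_opD(1)[OF pa] b_sa[symmetric]])
  have "op_sqrt (seqp a b) = sa \<circ> sb"
  proof (rule op_sqrt_unique[OF positive_op_seqp[OF a b]])
    define q where "q = op_sqrt sa"
    have "sb (q x) = q (sb x)" for x
      unfolding q_def by (rule op_sqrt_commute[OF pa positive_opD(1)[OF pb] sa_sb[symmetric]])
    moreover have "cinner x (sa (sb x)) = cinner (q x) (q (sb x))" for x
      using op_sqrt_square[OF pa, of "sb x"] selfadjoint_opD[OF selfadjoint_op_sqrt[OF pa], of x]
      by (simp add: q_def)
    ultimately have "cinner x ((sa \<circ> sb) x) = cinner (q x) (sb (q x))" for x by simp
    then show "positive_op (sa \<circ> sb)"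
      using bounded_op_comp[OF positive_opD(1)[OF pa] positive_opD(1)[OF pb]] pb
      by (simp add: positive_op_def)
    show "(sa \<circ> sb) ((sa \<circ> sb) x) = seqp a b x" for x
      by (simp add: seqp_apply sa_sb b_sa flip: sa_def sb_def)
        (simp add: sa_def sb_def op_sqrt_square[OF a] op_sqrt_square[OF b] ba)
  qed
  then show ?thesis by (simp add: fun_eq_iff seqp_apply sa_sb flip: sa_def sb_def)
qed

lemma positive_op_op_add: "positive_op a \<Longrightarrow> positive_op b \<Longrightarrow> positive_op (op_add a b)"
  using bounded_op_op_add[of a b] by (simp add: positive_op_def op_add_def cinner_add_right)

lemma seqp_commute_if_commute:
  assumes "positive_op a" "positive_op b" "positive_op c"
    and "a \<circ> c = c \<circ> a" "b \<circ> c = c \<circ> b"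
  shows "seqp c (seqp a b) = seqp (seqp a b) c"
    and "seqp c (op_add a b) = seqp (op_add a b) c"
proof -
  have ca: "c (a x) = a (c x)" and cb: "c (b x) = b (c x)" for x
    using assms(4,5) by (metis comp_apply)+
  show "seqp c (seqp a b) = seqp (seqp a b) c"
    using op_sqrt_commute[OF assms(1) positive_opD(1)[OF assms(3)] ca]
    by (intro seqp_commute positive_op_seqp assms) (simp add: seqp_apply cb)
  show "seqp c (op_add a b) = seqp (op_add a b) c"
    by (intro seqp_commute positive_op_op_add assms)
      (simp add: op_add_def bounded_op_add[OF positive_opD(1)[OF assms(3)]] ca cb)
qed

theorem theorem3p6:
  fixes M :: "'d measure"
    and \<I> \<I>s :: "'d set \<Rightarrow> ('h::chilbert_space \<Rightarrow> 'h) \<Rightarrow> ('h \<Rightarrow> 'h)"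
    and a b c :: "'h \<Rightarrow> 'h"
  assumes instr: "instrument M \<I>"
    and dual: "dual_instrument M \<I> \<I>s"
    and a: "effect a" and b: "effect b" and c: "effect c"
  shows
    "(eff_orth b c \<longrightarrow>
        sub_eq M (sub_obs \<I>s (seqp a (op_add b c)))
                 (sub_add (sub_obs \<I>s (seqp a b)) (sub_obs \<I>s (seqp a c))))
     \<and> (\<forall>n (lam :: nat \<Rightarrow> real) (bs :: nat \<Rightarrow> 'h \<Rightarrow> 'h).
          (\<forall>i\<in>{1..n}. 0 \<le> lam i \<and> lam i \<le> 1 \<and> effect (bs i)) \<and> (\<Sum>i=1..n. lam i) = 1 \<longrightarrow>
          sub_eq M (sub_obs \<I>s (seqp a (\<lambda>x. \<Sum>i=1..n. complex_of_real (lam i) *\<^sub>C bs i x)))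
                   (\<lambda>\<Delta> x. \<Sum>i=1..n. sub_scale (lam i) (sub_obs \<I>s (seqp a (bs i))) \<Delta> x))
     \<and> sub_eq M (sub_obs \<I>s (seqp id a)) (sub_obs \<I>s a)
     \<and> sub_eq M (sub_obs \<I>s (seqp a id)) (sub_obs \<I>s a)
     \<and> (seqp a b = op_zero \<longrightarrow> sub_eq M (sub_obs \<I>s (seqp a b)) (sub_obs \<I>s (seqp b a)))
     \<and> (a \<circ> b = b \<circ> a \<longrightarrow>
          sub_eq M (sub_obs \<I>s (seqp a (seqp b c))) (sub_obs \<I>s (seqp (seqp a b) c)))
     \<and> (a \<circ> c = c \<circ> a \<and> b \<circ> c = c \<circ> b \<longrightarrow>
          sub_eq M (sub_obs \<I>s (seqp c (seqp a b))) (sub_obs \<I>s (seqp (seqp a b) c))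
          \<and> (eff_orth a b \<longrightarrow>
               sub_eq M (sub_obs \<I>s (seqp c (op_add a b))) (sub_obs \<I>s (seqp (op_add a b) c))))
     \<and> sub_le M (sub_obs \<I>s (seqp a b)) (sub_obs \<I>s a)
     \<and> (op_le a b \<longrightarrow> sub_le M (sub_obs \<I>s (seqp c a)) (sub_obs \<I>s (seqp c b)))"
proof -
  interpret instrument_dual M \<I> \<I>s by unfold_locales (fact instr, fact dual)
  have pos: "positive_op a" "positive_op b" "positive_op c"
    using a b c by (simp_all add: effect_positive_op)
  have seqp_effect: "bounded_op (seqp Y X)" "selfadjoint_op (seqp Y X)"
    if "effect Y" "effect X" for Y X
    using that by (simp_all add: bounded_op_seqp selfadjoint_op_seqp effect_positive_op
        effect_bounded_op effect_selfadjoint)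
  have real_combination:
    "sub_eq M (sub_obs \<I>s (seqp a (\<lambda>x. \<Sum>i=1..n. complex_of_real (lam i) *\<^sub>C bs i x)))
      (\<lambda>\<Delta> x. \<Sum>i=1..n. sub_scale (lam i) (sub_obs \<I>s (seqp a (bs i))) \<Delta> x)"
    if "\<forall>i\<in>{1..n}. effect (bs i)" for n :: nat and lam bs
    unfolding seqp_lincomb[OF pos(1)] using that seqp_effect[OF a]
    by (intro sub_obs_real_lincomb) auto
  show ?thesis
    using sub_obs_op_add[OF seqp_effect[OF a b] seqp_effect[OF a c], folded seqp_op_add[OF pos(1)]]
      real_combination seqp_id_left[of a] seqp_id_right[OF pos(1)]
      seqp_eq_zero_commute[OF pos(1,2)] seqp_assoc[OF pos(1,2)] seqp_commute_if_commute[OF pos]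
      sub_obs_mono[OF seqp_effect[OF a b] effect_bounded_op[OF a] effect_selfadjoint[OF a]
        seqp_le_left[OF pos(1) b]]
      sub_obs_mono[OF seqp_effect[OF c a] seqp_effect[OF c b] seqp_mono[OF pos(3)]]
    by (simp add: sub_eq_def)
qed

end
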